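(* Let $(H,\sigma)$ be a coquasitriangular Hopf algebra, $X,A\subseteq H$ sub-Hopf algebras, $H_{X,A}=H_{l_X}H_{r_A}\subseteq H^0$, and consider the generalized quantum double $D(H_{X,A}^{\rm cop},X)$ with respect to the evaluation pairing $\langle\varphi,y\rangle=\varphi(y)$ ($\varphi\in H_{X,A}$, $y\in X$). Then the map $\pi:D(H_{X,A}^{\rm cop},X)\to H_{X,A}^{\rm cop}$, $\pi(l_xr_a\otimes y)=l_xr_a\,l_{S^{-1}(y)}$ ($x,y\in X$, $a\in A$), is a Hopf algebra morphism with $\pi\circ i={\rm Id}$, where $i(\varphi)=\varphi\otimes 1$.
   Context: Sweedler notation. A CQT Hopf algebra $(H,\sigma)$ has a convolution invertible bilinear $\sigma:H\otimes H\to k$ with $\sigma(hh',g)=\sigma(h,g_1)\sigma(h',g_2)$, $\sigma(g,hh')=\sigma(g_2,h)\sigma(g_1,h')$, $\sigma(1,h)=\sigma(h,1)=\varepsilon(h)$, $\sigma(h_1,h'_1)h_2h'_2=h'_1h_1\sigma(h_2,h'_2)$; its antipode $S$ is bijective. In the finite dual $H^0$: $l_x=\sigma(-,x)$, $r_a=\sigma(a,-)$, $H_{l_X}=\{l_x\mid x\in X\}$, $H_{r_A}=\{r_a\mid a\in A\}$, and $H_{X,A}=H_{l_X}H_{r_A}=H_{r_A}H_{l_X}$ is a sub-Hopf algebra of $H^0$ (with $l_{xy}=l_yl_x$, $\Delta(l_x)=l_{x_1}\otimes l_{x_2}$, $S(l_x)=l_{S^{-1}(x)}$, $r_{ab}=r_ar_b$,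 $\Delta(r_a)=r_{a_2}\otimes r_{a_1}$, $S(r_a)=r_{S^{-1}(a)}$). For Hopf algebras $U,V$ with bijective antipodes and a pairing $\langle\,,\rangle$, $D(U^{\rm cop},V)$ is the Hopf algebra on $U\otimes V$ with unit $1\otimes1$, multiplication $(m\otimes x)(n\otimes y)=\langle n_3,x_1\rangle\langle S_U^{-1}(n_1),x_3\rangle mn_2\otimes x_2y$ and comultiplication $\Delta(m\otimes x)=(m_2\otimes x_1)\otimes(m_1\otimes x_2)$ (subscripts in $U$, $V$); here $U=H_{X,A}$, $V=X$. *)

theory Defs
  imports Main
begin

text \<open>Elements of tensor products
are represented by finite lists of pure tensors (pairs/triples); two such lists denote
the same tensor iff all multilinear forms into k agree on them (valid over a field).
The comultiplication is given as a function Delta returning a representative list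
(Sweedler notation: h1 (x) h2 ranges over Delta h). Elements of the finite dual H^0 are
functions 'h => 'k; an element of H^0 (x) H^0 is determined by its values on a (x) b.\<close>

definition lin :: "('k::field \<Rightarrow> 'h::ab_group_add \<Rightarrow> 'h) \<Rightarrow> ('h \<Rightarrow> 'k) \<Rightarrow> bool" where
  "lin sc f \<longleftrightarrow> (\<forall>a b. f (a + b) = f a + f b) \<and> (\<forall>c a. f (sc c a) = c * f a)"

definition linH :: "('k::field \<Rightarrow> 'h::ab_group_add \<Rightarrow> 'h) \<Rightarrow> ('h \<Rightarrow> 'h) \<Rightarrow> bool" where
  "linH sc f \<longleftrightarrow> (\<forall>a b. f (a + b) = f a + f b) \<and> (\<forall>c a. f (sc c a) = sc c (f a))"

definition bil :: "('k::field \<Rightarrow> 'h::ab_group_add \<Rightarrow> 'h) \<Rightarrow> ('h \<Rightarrow> 'h \<Rightarrow> 'k) \<Rightarrow> bool" where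
  "bil sc f \<longleftrightarrow> (\<forall>b. lin sc (\<lambda>a. f a b)) \<and> (\<forall>a. lin sc (f a))"

definition tril :: "('k::field \<Rightarrow> 'h::ab_group_add \<Rightarrow> 'h) \<Rightarrow> ('h \<Rightarrow> 'h \<Rightarrow> 'h \<Rightarrow> 'k) \<Rightarrow> bool" where
  "tril sc f \<longleftrightarrow> (\<forall>b c. lin sc (\<lambda>a. f a b c)) \<and> (\<forall>a c. lin sc (\<lambda>b. f a b c))
                 \<and> (\<forall>a b. lin sc (f a b))"

definition teq2 :: "('k::field \<Rightarrow> 'h::ab_group_add \<Rightarrow> 'h) \<Rightarrow> ('h \<times> 'h) list \<Rightarrow> ('h \<times> 'h) list \<Rightarrow> bool" where
  "teq2 sc L M \<longleftrightarrow> (\<forall>f. bil sc f \<longrightarrow>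
      sum_list (map (\<lambda>(a,b). f a b) L) = sum_list (map (\<lambda>(a,b). f a b) M))"

definition teq3 :: "('k::field \<Rightarrow> 'h::ab_group_add \<Rightarrow> 'h) \<Rightarrow> ('h \<times> 'h \<times> 'h) list \<Rightarrow> ('h \<times> 'h \<times> 'h) list \<Rightarrow> bool" where
  "teq3 sc L M \<longleftrightarrow> (\<forall>f. tril sc f \<longrightarrow>
      sum_list (map (\<lambda>(a,b,c). f a b c) L) = sum_list (map (\<lambda>(a,b,c). f a b c) M))"

definition hopf_algebra ::
  "('k::field \<Rightarrow> 'h::ab_group_add \<Rightarrow> 'h) \<Rightarrow> ('h \<Rightarrow> 'h \<Rightarrow> 'h) \<Rightarrow> 'h \<Rightarrow> ('h \<Rightarrow> ('h \<times> 'h) list)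
    \<Rightarrow> ('h \<Rightarrow> 'k) \<Rightarrow> ('h \<Rightarrow> 'h) \<Rightarrow> bool" where
  "hopf_algebra sc mult one Delta eps S \<longleftrightarrow>
     \<comment> \<open>vector space\<close>
     (\<forall>a b c. sc a (b + c) = sc a b + sc a c) \<and>
     (\<forall>a b x. sc (a + b) x = sc a x + sc b x) \<and>
     (\<forall>a b x. sc a (sc b x) = sc (a * b) x) \<and>
     (\<forall>x. sc 1 x = x) \<and>
     \<comment> \<open>associative unital algebra, bilinear multiplication\<close>
     (\<forall>a b c. mult (a + b) c = mult a c + mult b c) \<and>
     (\<forall>a b c. mult a (b + c) = mult a b + mult a c) \<and>
     (\<forall>k a b. mult (sc k a) b = sc k (mult a b)) \<and>
     (\<forall>k a b. mult a (sc k b) = sc k (mult a b)) \<and>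
     (\<forall>a b c. mult (mult a b) c = mult a (mult b c)) \<and>
     (\<forall>a. mult one a = a \<and> mult a one = a) \<and>
     \<comment> \<open>linear, coassociative, counital comultiplication\<close>
     (\<forall>a b. teq2 sc (Delta (a + b)) (Delta a @ Delta b)) \<and>
     (\<forall>k a. teq2 sc (Delta (sc k a)) (map (\<lambda>(p,q). (sc k p, q)) (Delta a))) \<and>
     (\<forall>h. teq3 sc [(p1, p2, q). (p,q) \<leftarrow> Delta h, (p1,p2) \<leftarrow> Delta p]
                  [(p, q1, q2). (p,q) \<leftarrow> Delta h, (q1,q2) \<leftarrow> Delta q]) \<and>
     lin sc eps \<and>
     (\<forall>h. sum_list (map (\<lambda>(p,q). sc (eps p) q) (Delta h)) = h) \<and>
     (\<forall>h. sum_list (map (\<lambda>(p,q). sc (eps q) p) (Delta h)) = h) \<and>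
     \<comment> \<open>bialgebra compatibility\<close>
     (\<forall>a b. teq2 sc (Delta (mult a b))
                [(mult a1 b1, mult a2 b2). (a1,a2) \<leftarrow> Delta a, (b1,b2) \<leftarrow> Delta b]) \<and>
     teq2 sc (Delta one) [(one, one)] \<and>
     (\<forall>a b. eps (mult a b) = eps a * eps b) \<and> eps one = 1 \<and>
     \<comment> \<open>antipode, assumed bijective\<close>
     linH sc S \<and>
     (\<forall>h. sum_list (map (\<lambda>(p,q). mult (S p) q) (Delta h)) = sc (eps h) one) \<and>
     (\<forall>h. sum_list (map (\<lambda>(p,q). mult p (S q)) (Delta h)) = sc (eps h) one) \<and>
     bij S"

definition cqt ::
  "('k::field \<Rightarrow> 'h::ab_group_add \<Rightarrow> 'h) \<Rightarrow> ('h \<Rightarrow> 'h \<Rightarrow> 'h) \<Rightarrow> 'h \<Rightarrow> ('h \<Rightarrow> ('h \<times> 'h) list)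
    \<Rightarrow> ('h \<Rightarrow> 'k) \<Rightarrow> ('h \<Rightarrow> 'h \<Rightarrow> 'k) \<Rightarrow> bool" where
  "cqt sc mult one Delta eps \<sigma> \<longleftrightarrow>
     bil sc \<sigma> \<and>
     (\<exists>\<tau>. bil sc \<tau> \<and>
        (\<forall>h g. sum_list [\<sigma> h1 g1 * \<tau> h2 g2. (h1,h2) \<leftarrow> Delta h, (g1,g2) \<leftarrow> Delta g] = eps h * eps g) \<and>
        (\<forall>h g. sum_list [\<tau> h1 g1 * \<sigma> h2 g2. (h1,h2) \<leftarrow> Delta h, (g1,g2) \<leftarrow> Delta g] = eps h * eps g)) \<and>
     (\<forall>h h' g. \<sigma> (mult h h') g = sum_list [\<sigma> h g1 * \<sigma> h' g2. (g1,g2) \<leftarrow> Delta g]) \<and>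
     (\<forall>g h h'. \<sigma> g (mult h h') = sum_list [\<sigma> g2 h * \<sigma> g1 h'. (g1,g2) \<leftarrow> Delta g]) \<and>
     (\<forall>h. \<sigma> one h = eps h \<and> \<sigma> h one = eps h) \<and>
     (\<forall>h h'. sum_list [sc (\<sigma> h1 h1') (mult h2 h2'). (h1,h2) \<leftarrow> Delta h, (h1',h2') \<leftarrow> Delta h']
           = sum_list [sc (\<sigma> h2 h2') (mult h1' h1). (h1,h2) \<leftarrow> Delta h, (h1',h2') \<leftarrow> Delta h'])"

text \<open>Sub-Hopf algebra X of H (closed under S and S^{-1}, i.e. S(X) = X).\<close>
definition sub_hopf ::
  "('k::field \<Rightarrow> 'h::ab_group_add \<Rightarrow> 'h) \<Rightarrow> ('h \<Rightarrow> 'h \<Rightarrow> 'h) \<Rightarrow> 'h \<Rightarrow> ('h \<Rightarrow> ('h \<times> 'h) list)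
    \<Rightarrow> ('h \<Rightarrow> 'h) \<Rightarrow> 'h set \<Rightarrow> bool" where
  "sub_hopf sc mult one Delta S X \<longleftrightarrow>
     0 \<in> X \<and> (\<forall>a\<in>X. \<forall>b\<in>X. a + b \<in> X) \<and> (\<forall>c. \<forall>a\<in>X. sc c a \<in> X) \<and>
     one \<in> X \<and> (\<forall>a\<in>X. \<forall>b\<in>X. mult a b \<in> X) \<and>
     (\<forall>x\<in>X. \<exists>L. set L \<subseteq> X \<times> X \<and> teq2 sc L (Delta x)) \<and>
     S ` X = X"

definition conv :: "('h \<Rightarrow> ('h \<times> 'h) list) \<Rightarrow> ('h \<Rightarrow> 'k::field) \<Rightarrow> ('h \<Rightarrow> 'k) \<Rightarrow> 'h \<Rightarrow> 'k" where
  "conv Delta f g h = sum_list [f p * g q. (p,q) \<leftarrow> Delta h]"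

definition lfun :: "('h \<Rightarrow> 'h \<Rightarrow> 'k) \<Rightarrow> 'h \<Rightarrow> 'h \<Rightarrow> 'k" where
  "lfun \<sigma> x = (\<lambda>h. \<sigma> h x)"

definition rfun :: "('h \<Rightarrow> 'h \<Rightarrow> 'k) \<Rightarrow> 'h \<Rightarrow> 'h \<Rightarrow> 'k" where
  "rfun \<sigma> a = (\<lambda>h. \<sigma> a h)"

text \<open>H_{X,A} = H_{l_X} H_{r_A}: the linear span of the products l_x r_a in H^0.\<close>
definition HXA :: "('h \<Rightarrow> ('h \<times> 'h) list) \<Rightarrow> ('h \<Rightarrow> 'h \<Rightarrow> 'k::field) \<Rightarrow> 'h set \<Rightarrow> 'h set \<Rightarrow> ('h \<Rightarrow> 'k) set" where
  "HXA Delta \<sigma> X A = {f. \<exists>L :: ('k \<times> 'h \<times> 'h) list. (\<forall>(c,x,a)\<in>set L. x \<in> X \<and> a \<in> A) \<and>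
      f = (\<lambda>h. sum_list [c * conv Delta (lfun \<sigma> x) (rfun \<sigma> a) h. (c,x,a) \<leftarrow> L])}"

text \<open>Comultiplication of H^0 restricted to U: a representative of Delta(f) in U (x) U,
  characterised by f1(a) f2(b) = f(ab).\<close>
definition DeltaU :: "('h \<Rightarrow> 'h \<Rightarrow> 'h) \<Rightarrow> ('h \<Rightarrow> 'k::field) set \<Rightarrow> ('h \<Rightarrow> 'k)
     \<Rightarrow> (('h \<Rightarrow> 'k) \<times> ('h \<Rightarrow> 'k)) list" where
  "DeltaU mult U f = (SOME L. set L \<subseteq> U \<times> U \<and>
      (\<forall>a b. sum_list [g a * g' b. (g,g') \<leftarrow> L] = f (mult a b)))"

definition evq :: "(('h \<Rightarrow> 'k::field) \<times> ('h \<Rightarrow> 'k)) list \<Rightarrow> (('h \<Rightarrow> 'k) \<times> ('h \<Rightarrow> 'k)) list \<Rightarrow> bool" where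
  "evq L M \<longleftrightarrow> (\<forall>a b. sum_list [g a * g' b. (g,g') \<leftarrow> L] = sum_list [g a * g' b. (g,g') \<leftarrow> M])"

text \<open>Multiplication of the generalized quantum double D(U^cop, X) with evaluation pairing:
 (m (x) x)(n (x) y) = <n3,x1> <S_U^{-1}(n1),x3> m n2 (x) x2 y, with S_U^{-1}(n1) = n1 o S^{-1}.\<close>
definition multD ::
  "('h \<Rightarrow> 'h \<Rightarrow> 'h) \<Rightarrow> ('h \<Rightarrow> ('h \<times> 'h) list) \<Rightarrow> ('h \<Rightarrow> 'h) \<Rightarrow> ('h \<Rightarrow> 'k::field) set
    \<Rightarrow> (('h \<Rightarrow> 'k) \<times> 'h) list \<Rightarrow> (('h \<Rightarrow> 'k) \<times> 'h) list \<Rightarrow> (('h \<Rightarrow> 'k) \<times> 'h) list" where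
  "multD mult Delta S U d d' =
     [ ((\<lambda>h. (n3 x1 * n1 (inv S x3)) * conv Delta m n2 h), mult x2 y).
        (m,x) \<leftarrow> d, (n,y) \<leftarrow> d', (p,n3) \<leftarrow> DeltaU mult U n, (n1,n2) \<leftarrow> DeltaU mult U p,
        (x1,q) \<leftarrow> Delta x, (x2,x3) \<leftarrow> Delta q ]"

text \<open>Comultiplication of D(U^cop, X): Delta(m (x) x) = (m2 (x) x1) (x) (m1 (x) x2).\<close>
definition comultD ::
  "('h \<Rightarrow> 'h \<Rightarrow> 'h) \<Rightarrow> ('h \<Rightarrow> ('h \<times> 'h) list) \<Rightarrow> ('h \<Rightarrow> 'k::field) set
    \<Rightarrow> (('h \<Rightarrow> 'k) \<times> 'h) list \<Rightarrow> ((('h \<Rightarrow> 'k) \<times> 'h) \<times> (('h \<Rightarrow> 'k) \<times> 'h)) list" where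
  "comultD mult Delta U d =
     [ ((m2, x1), (m1, x2)). (m,x) \<leftarrow> d, (m1,m2) \<leftarrow> DeltaU mult U m, (x1,x2) \<leftarrow> Delta x ]"

definition counitD :: "'h \<Rightarrow> ('h \<Rightarrow> 'k::field) \<Rightarrow> (('h \<Rightarrow> 'k) \<times> 'h) list \<Rightarrow> 'k" where
  "counitD one eps d = sum_list [m one * eps x. (m,x) \<leftarrow> d]"

definition piD :: "('h \<Rightarrow> ('h \<times> 'h) list) \<Rightarrow> ('h \<Rightarrow> 'h) \<Rightarrow> ('h \<Rightarrow> 'h \<Rightarrow> 'k::field)
    \<Rightarrow> (('h \<Rightarrow> 'k) \<times> 'h) list \<Rightarrow> 'h \<Rightarrow> 'k" where
  "piD Delta S \<sigma> d = (\<lambda>h. sum_list [conv Delta m (lfun \<sigma> (inv S y)) h. (m,y) \<leftarrow> d])"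

end

theory Submission
  imports Defs "HOL.Vector_Spaces"
begin

text \<open>
  The projection \<open>\<pi>(\<phi> \<otimes> y) = \<phi> l\<^bsub>S\<^sup>-\<^sup>1 y\<^esub>\<close> lands in \<open>H\<^bsub>X,A\<^esub>\<close> because
  \<open>l\<^sub>x l\<^sub>w = l\<^bsub>w x\<^esub>\<close> and because the coquasitriangularity axiom gives the commutation
  relation \<open>r\<^sub>a l\<^sub>y = \<sigma>(a\<^sub>3, S y\<^sub>1) \<sigma>(a\<^sub>1, y\<^sub>3) l\<^bsub>y\<^sub>2\<^esub> r\<^bsub>a\<^sub>2\<^esub>\<close>, so that
  \<open>l\<^sub>x r\<^sub>a l\<^sub>w\<close> is again a combination of products \<open>l\<^bsub>x'\<^esub> r\<^bsub>a'\<^esub>\<close>.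
  Multiplicativity is the exchange relation
  \<open>l\<^bsub>S\<^sup>-\<^sup>1 x\<^esub> n = n\<^sub>3(x\<^sub>1) n\<^sub>1(S\<^sup>-\<^sup>1 x\<^sub>3) n\<^sub>2 l\<^bsub>S\<^sup>-\<^sup>1 x\<^sub>2\<^esub>\<close> in \<open>H\<^sup>0\<close>,
  which again comes from the braiding axiom, \<open>S\<^sup>-\<^sup>1\<close> being an anti-coalgebra map.
  Comultiplicativity is \<open>\<Delta>(l\<^sub>x) = l\<^bsub>x\<^sub>1\<^esub> \<otimes> l\<^bsub>x\<^sub>2\<^esub>\<close>, i.e.
  \<open>\<sigma>(h h', x) = \<sigma>(h, x\<^sub>1) \<sigma>(h', x\<^sub>2)\<close>, and \<open>\<pi> \<circ> i = id\<close> because \<open>l\<^sub>1 = \<epsilon>\<close>.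
\<close>

lemma sum_list_swap:
  "(\<Sum>x\<leftarrow>A. \<Sum>y\<leftarrow>B. f x y) = (\<Sum>y\<leftarrow>B. \<Sum>x\<leftarrow>A. (f x y :: 'a::comm_monoid_add))"
  by (induction A) (simp_all add: sum_list_addf)

lemma sum_pairs_cong:
  "(\<And>p q. (p,q) \<in> set L \<Longrightarrow> f p q = g p q) \<Longrightarrow> (\<Sum>(p,q)\<leftarrow>L. f p q) = (\<Sum>(p,q)\<leftarrow>L. g p q)"
  by (induction L) auto

lemma sum_pairs_zero [simp]: "(\<Sum>(p,q)\<leftarrow>L. (0::'a::monoid_add)) = 0"
  by (induction L) auto

lemma sum_pairs_addf:
  "(\<Sum>(p,q)\<leftarrow>L. (f p q + g p q :: 'a::comm_monoid_add)) = (\<Sum>(p,q)\<leftarrow>L. f p q) + (\<Sum>(p,q)\<leftarrow>L. g p q)"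
  by (induction L) (auto simp: algebra_simps)

lemma sum_pairs_swap:
  "(\<Sum>(p,q)\<leftarrow>A. \<Sum>(p',q')\<leftarrow>B. f p q p' q')
     = (\<Sum>(p',q')\<leftarrow>B. \<Sum>(p,q)\<leftarrow>A. (f p q p' q' :: 'a::comm_monoid_add))"
  using sum_list_swap[of "\<lambda>x y. f (fst x) (snd x) (fst y) (snd y)" B A]
  by (simp add: case_prod_beta')

lemma sum_pairs_pull2:
  "(\<Sum>(a,b)\<leftarrow>A. \<Sum>(c,d)\<leftarrow>B a b. \<Sum>(x,y)\<leftarrow>W. F a b c d x y)
     = (\<Sum>(x,y)\<leftarrow>W. \<Sum>(a,b)\<leftarrow>A. \<Sum>(c,d)\<leftarrow>B a b. (F a b c d x y :: 'a::comm_monoid_add))"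
  by (simp add: sum_pairs_swap[where A="B _ _"] sum_pairs_swap[where A=A])

lemma sum_pairs_pull3:
  "(\<Sum>(a,b)\<leftarrow>A. \<Sum>(c,d)\<leftarrow>B a b. \<Sum>(e,f)\<leftarrow>C a b c d. \<Sum>(x,y)\<leftarrow>W. F a b c d e f x y)
     = (\<Sum>(x,y)\<leftarrow>W. \<Sum>(a,b)\<leftarrow>A. \<Sum>(c,d)\<leftarrow>B a b. \<Sum>(e,f)\<leftarrow>C a b c d.
          (F a b c d e f x y :: 'a::comm_monoid_add))"
  by (simp add: sum_pairs_pull2 sum_pairs_swap[where A=A])

lemma sum_pairs_reverse3:
  "(\<Sum>(a,b)\<leftarrow>A. \<Sum>(c,d)\<leftarrow>B. \<Sum>(e,f)\<leftarrow>C. F a b c d e f)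
     = (\<Sum>(e,f)\<leftarrow>C. \<Sum>(c,d)\<leftarrow>B. \<Sum>(a,b)\<leftarrow>A. (F a b c d e f :: 'a::comm_monoid_add))"
  by (subst sum_pairs_pull2) (intro sum_pairs_cong sum_pairs_swap)

lemma sum_pairs_const_mult:
  "c * (\<Sum>(p,q)\<leftarrow>L. g p q) = (\<Sum>(p,q)\<leftarrow>L. c * (g p q :: 'a::semiring_0))"
  by (induction L) (auto simp: distrib_left)

lemma sum_pairs_mult_const:
  "(\<Sum>(p,q)\<leftarrow>L. g p q) * c = (\<Sum>(p,q)\<leftarrow>L. (g p q :: 'a::semiring_0) * c)"
  by (induction L) (auto simp: distrib_right)

lemma sum_pairs_map_comp [simp]:
  "sum_list (map (f \<circ> (\<lambda>(c,d). g c d)) M) = (\<Sum>(c,d)\<leftarrow>M. f (g c d))"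
  by (induction M) auto

lemma sum_concat_map_Pair [simp]:
  "(\<Sum>x\<leftarrow>concat (map (\<lambda>(a,b). map (Pair a) (M a b)) L). f x)
     = (\<Sum>(a,b)\<leftarrow>L. \<Sum>y\<leftarrow>M a b. f (a,y))"
  by (induction L) (auto simp: comp_def)

lemma sum_concat_map_pairs [simp]:
  "(\<Sum>x\<leftarrow>concat (map (\<lambda>(a,b). map (\<lambda>(c,d). g a b c d) (M a b)) L). f x)
     = (\<Sum>(a,b)\<leftarrow>L. \<Sum>(c,d)\<leftarrow>M a b. f (g a b c d))"
  by (induction L) auto

lemma sum_pairs_concat_map [simp]:
  "sum_list (concat (map (\<lambda>(a,b). map (\<lambda>(c,d). g a b c d) (M a b)) L))
     = (\<Sum>(a,b)\<leftarrow>L. \<Sum>(c,d)\<leftarrow>M a b. g a b c d)"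
  by (induction L) (auto simp: comp_def)

lemma sum_pairs_concat:
  "sum_list (map f (concat (map (\<lambda>(a,b). G a b) L))) = (\<Sum>(a,b)\<leftarrow>L. sum_list (map f (G a b)))"
  by (induction L) auto

section \<open>Linear functionals\<close>

lemma lin_add: "lin sc f \<Longrightarrow> f (a + b) = f a + f b"
  by (simp add: lin_def)

lemma lin_scale: "lin sc f \<Longrightarrow> f (sc c a) = c * f a"
  by (simp add: lin_def)

lemma lin_zero: "lin sc f \<Longrightarrow> f 0 = 0"
  using lin_add[of sc f 0 0] by (metis add_cancel_right_left)

lemma lin_diff: "lin sc f \<Longrightarrow> f (a - b) = f a - f b"
  using lin_add[of sc f "a - b" b] by simp

lemma lin_sum_pairs: "lin sc f \<Longrightarrow> f (\<Sum>(p,q)\<leftarrow>L. g p q) = (\<Sum>(p,q)\<leftarrow>L. f (g p q))"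
  by (induction L) (auto simp: lin_zero lin_add)

lemma linH_add: "linH sc f \<Longrightarrow> f (a + b) = f a + f b"
  by (simp add: linH_def)

lemma linH_scale: "linH sc f \<Longrightarrow> f (sc c a) = sc c (f a)"
  by (simp add: linH_def)

lemma linH_zero: "linH sc f \<Longrightarrow> f 0 = 0"
  using linH_add[of sc f 0 0] by (metis add_cancel_right_left)

lemma linH_sum_pairs: "linH sc f \<Longrightarrow> f (\<Sum>(p,q)\<leftarrow>L. g p q) = (\<Sum>(p,q)\<leftarrow>L. f (g p q))"
  by (induction L) (auto simp: linH_zero linH_add)

lemma lin_comp_linH: "lin sc f \<Longrightarrow> linH sc g \<Longrightarrow> lin sc (\<lambda>h. f (g h))"
  by (simp add: lin_def linH_def)

named_theorems lin_intros

lemma lin_const_mult [lin_intros]: "lin sc f \<Longrightarrow> lin sc (\<lambda>h. c * f h)"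
  by (simp add: lin_def algebra_simps)

lemma lin_mult_const [lin_intros]: "lin sc f \<Longrightarrow> lin sc (\<lambda>h. f h * c)"
  by (simp add: lin_def algebra_simps)

lemma lin_sum_list: "(\<And>x. lin sc (G x)) \<Longrightarrow> lin sc (\<lambda>h. \<Sum>x\<leftarrow>L. G x h)"
  unfolding lin_def by (induction L) (simp_all add: sum_list_addf sum_list_const_mult distrib_left)

lemma lin_sum_pairs_fun [lin_intros]:
  "(\<And>p q. lin sc (G p q)) \<Longrightarrow> lin sc (\<lambda>h. \<Sum>(p,q)\<leftarrow>L. G p q h)"
  unfolding lin_def by (induction L) (auto simp: sum_list_addf sum_list_const_mult distrib_left)

lemma linH_ident [lin_intros]: "linH sc (\<lambda>h. h)"
  by (simp add: linH_def)

lemma vector_space_field: "vector_space ((*) :: 'k::field \<Rightarrow> 'k \<Rightarrow> 'k)"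
  unfolding vector_space_def by (simp_all add: algebra_simps)

lemma exists_lin_separating:
  fixes sc :: "'k::field \<Rightarrow> 'h::ab_group_add \<Rightarrow> 'h"
  assumes "vector_space sc" and "x \<noteq> 0"
  shows "\<exists>\<phi>. lin sc \<phi> \<and> \<phi> x = 1"
proof -
  interpret vector_space_pair sc "(*) :: 'k \<Rightarrow> 'k \<Rightarrow> 'k"
    using assms(1) vector_space_field by (simp add: vector_space_pair_def)
  have ind: "vs1.independent {x}"
    using assms(2) by (intro vs1.independent_insertI) (auto simp: vs1.span_empty vs1.independent_empty)
  have "construct {x} (\<lambda>_. 1) x = 1"
    by (rule construct_basis[OF ind]) simp
  moreover have "lin sc (construct {x} (\<lambda>_. 1))"
    using linear_construct[OF ind, of "\<lambda>_. 1"] unfolding lin_def by (simp add: linear_iff)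
  ultimately show ?thesis by blast
qed

lemma lin_separating_eq:
  fixes sc :: "'k::field \<Rightarrow> 'h::ab_group_add \<Rightarrow> 'h"
  assumes "vector_space sc" and "\<And>\<phi>. lin sc \<phi> \<Longrightarrow> \<phi> u = \<phi> v"
  shows "u = v"
proof (rule ccontr)
  assume "u \<noteq> v"
  then obtain \<phi> where "lin sc \<phi>" "\<phi> (u - v) = 1"
    using exists_lin_separating[OF assms(1)] by (metis right_minus_eq)
  then show False using assms(2)[of \<phi>] lin_diff[of sc \<phi> u v] by simp
qed

section \<open>Hopf algebras\<close>

locale hopf =
  fixes sc :: "'k::field \<Rightarrow> 'h::ab_group_add \<Rightarrow> 'h" and mult :: "'h \<Rightarrow> 'h \<Rightarrow> 'h" and one :: 'h
    and Delta :: "'h \<Rightarrow> ('h \<times> 'h) list" and eps :: "'h \<Rightarrow> 'k" and S :: "'h \<Rightarrow> 'h"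
  assumes hopf_algebra: "hopf_algebra sc mult one Delta eps S"
begin

lemmas hopf_laws = hopf_algebra[unfolded hopf_algebra_def]

lemma vector_space: "vector_space sc"
  unfolding vector_space_def using hopf_laws by simp

lemma mult_addl: "mult (a + b) c = mult a c + mult b c"
  and mult_addr: "mult a (b + c) = mult a b + mult a c"
  and mult_scalel: "mult (sc k a) b = sc k (mult a b)"
  and mult_scaler: "mult a (sc k b) = sc k (mult a b)"
  and mult_assoc: "mult (mult a b) c = mult a (mult b c)"
  and mult_one [simp]: "mult one a = a" "mult a one = a"
  using hopf_laws by simp_all

lemma Delta_add: "teq2 sc (Delta (a + b)) (Delta a @ Delta b)"
  and Delta_scale: "teq2 sc (Delta (sc k a)) (map (\<lambda>(p,q). (sc k p, q)) (Delta a))"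
  and Delta_coassoc: "teq3 sc [(p1, p2, q). (p,q) \<leftarrow> Delta h, (p1,p2) \<leftarrow> Delta p]
                              [(p, q1, q2). (p,q) \<leftarrow> Delta h, (q1,q2) \<leftarrow> Delta q]"
  and Delta_mult: "teq2 sc (Delta (mult a b))
                     [(mult a1 b1, mult a2 b2). (a1,a2) \<leftarrow> Delta a, (b1,b2) \<leftarrow> Delta b]"
  and Delta_one: "teq2 sc (Delta one) [(one, one)]"
  using hopf_laws by simp_all

lemma lin_eps: "lin sc eps"
  and counit_left: "(\<Sum>(p,q)\<leftarrow>Delta h. sc (eps p) q) = h"
  and counit_right: "(\<Sum>(p,q)\<leftarrow>Delta h. sc (eps q) p) = h"
  and eps_mult: "eps (mult a b) = eps a * eps b"
  and eps_one [simp]: "eps one = 1"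
  using hopf_laws by simp_all

lemma linH_S: "linH sc S"
  and antipode_left: "(\<Sum>(p,q)\<leftarrow>Delta h. mult (S p) q) = sc (eps h) one"
  and antipode_right: "(\<Sum>(p,q)\<leftarrow>Delta h. mult p (S q)) = sc (eps h) one"
  and bij_S: "bij S"
  using hopf_laws by simp_all

lemma linH_mult_left [lin_intros]: "linH sc g \<Longrightarrow> linH sc (\<lambda>h. mult (g h) c)"
  by (simp add: linH_def mult_addl mult_scalel)

lemma linH_mult_right [lin_intros]: "linH sc g \<Longrightarrow> linH sc (\<lambda>h. mult c (g h))"
  by (simp add: linH_def mult_addr mult_scaler)

lemma linH_S_comp [lin_intros]: "linH sc g \<Longrightarrow> linH sc (\<lambda>h. S (g h))"
  using linH_S by (simp add: linH_def)

lemma lin_eps_comp [lin_intros]: "linH sc g \<Longrightarrow> lin sc (\<lambda>h. eps (g h))"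
  using lin_comp_linH[OF lin_eps] .

text \<open>The tensor representatives in teq2 are only determined up to multilinear forms,
  so identities between elements of H are proved by testing them against all linear functionals.\<close>

lemma eq_by_lin: "(\<And>\<phi>. lin sc \<phi> \<Longrightarrow> \<phi> u = \<phi> v) \<Longrightarrow> u = v"
  by (rule lin_separating_eq[OF vector_space])

lemma teq2_sum:
  assumes "teq2 sc L M" "\<And>b. lin sc (\<lambda>a. F a b)" "\<And>a. lin sc (\<lambda>b. F a b)"
  shows "(\<Sum>(a,b)\<leftarrow>L. F a b) = (\<Sum>(a,b)\<leftarrow>M. F a b)"
  using assms unfolding teq2_def bil_def by auto

lemma teq2_sumH:
  assumes "teq2 sc L M" "\<And>b. linH sc (\<lambda>a. G a b)" "\<And>a. linH sc (\<lambda>b. G a b)"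
  shows "(\<Sum>(a,b)\<leftarrow>L. G a b) = (\<Sum>(a,b)\<leftarrow>M. G a b)"
proof (rule eq_by_lin)
  fix \<phi> assume \<phi>: "lin sc \<phi>"
  have "(\<Sum>(a,b)\<leftarrow>L. \<phi> (G a b)) = (\<Sum>(a,b)\<leftarrow>M. \<phi> (G a b))"
    using assms by (intro teq2_sum) (auto intro: lin_comp_linH[OF \<phi>])
  then show "\<phi> (\<Sum>(a,b)\<leftarrow>L. G a b) = \<phi> (\<Sum>(a,b)\<leftarrow>M. G a b)"
    by (simp add: lin_sum_pairs[OF \<phi>])
qed

lemma lin_sum_Delta [lin_intros]:
  assumes "\<And>b. lin sc (\<lambda>a. F a b)" "\<And>a. lin sc (\<lambda>b. F a b)"
  shows "lin sc (\<lambda>h. \<Sum>(p,q)\<leftarrow>Delta h. F p q)"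
proof -
  have "(\<Sum>(p,q)\<leftarrow>Delta (sc c a). F p q) = (\<Sum>(p,q)\<leftarrow>Delta a. c * F p q)" for c a
    using teq2_sum[OF Delta_scale assms] by (simp add: lin_scale[OF assms(1)])
  then show ?thesis
    using teq2_sum[OF Delta_add assms] by (simp add: lin_def sum_pairs_const_mult)
qed

lemma lin_sum_Delta_comp [lin_intros]:
  assumes "\<And>b. lin sc (\<lambda>a. F a b)" "\<And>a. lin sc (\<lambda>b. F a b)" "linH sc g"
  shows "lin sc (\<lambda>h. \<Sum>(p,q)\<leftarrow>Delta (g h). F p q)"
  using lin_comp_linH[OF lin_sum_Delta[OF assms(1,2)] assms(3)] .

lemma coassoc:
  assumes "\<And>b c. lin sc (\<lambda>a. F a b c)" "\<And>a c. lin sc (\<lambda>b. F a b c)" "\<And>a b. lin sc (\<lambda>c. F a b c)"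
  shows "(\<Sum>(p,q)\<leftarrow>Delta h. \<Sum>(p1,p2)\<leftarrow>Delta p. F p1 p2 q)
       = (\<Sum>(p,q)\<leftarrow>Delta h. \<Sum>(q1,q2)\<leftarrow>Delta q. F p q1 q2)"
  using Delta_coassoc[of h] assms unfolding teq3_def tril_def by simp

lemma Delta_mult_sum:
  assumes "\<And>b. lin sc (\<lambda>a. F a b)" "\<And>a. lin sc (\<lambda>b. F a b)"
  shows "(\<Sum>(p,q)\<leftarrow>Delta (mult a b). F p q)
       = (\<Sum>(a1,a2)\<leftarrow>Delta a. \<Sum>(b1,b2)\<leftarrow>Delta b. F (mult a1 b1) (mult a2 b2))"
  using teq2_sum[OF Delta_mult assms] by simp

lemma Delta_mult_sumH:
  assumes "\<And>b. linH sc (\<lambda>a. F a b)" "\<And>a. linH sc (\<lambda>b. F a b)"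
  shows "(\<Sum>(p,q)\<leftarrow>Delta (mult a b). F p q)
       = (\<Sum>(a1,a2)\<leftarrow>Delta a. \<Sum>(b1,b2)\<leftarrow>Delta b. F (mult a1 b1) (mult a2 b2))"
  using teq2_sumH[OF Delta_mult assms] by simp

lemma Delta_one_sum:
  assumes "\<And>b. lin sc (\<lambda>a. F a b)" "\<And>a. lin sc (\<lambda>b. F a b)"
  shows "(\<Sum>(p,q)\<leftarrow>Delta one. F p q) = F one one"
  using teq2_sum[OF Delta_one assms] by simp

lemma Delta_one_sumH:
  assumes "\<And>b. linH sc (\<lambda>a. F a b)" "\<And>a. linH sc (\<lambda>b. F a b)"
  shows "(\<Sum>(p,q)\<leftarrow>Delta one. F p q) = F one one"
  using teq2_sumH[OF Delta_one assms] by simp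

lemma counit_left_lin: "lin sc \<phi> \<Longrightarrow> (\<Sum>(p,q)\<leftarrow>Delta h. eps p * \<phi> q) = \<phi> h"
  using arg_cong[OF counit_left[of h], of \<phi>] by (simp add: lin_sum_pairs lin_scale)

lemma counit_right_lin: "lin sc \<phi> \<Longrightarrow> (\<Sum>(p,q)\<leftarrow>Delta h. \<phi> p * eps q) = \<phi> h"
  using arg_cong[OF counit_right[of h], of \<phi>] by (simp add: lin_sum_pairs lin_scale mult.commute)

lemma antipode_left_lin: "lin sc \<phi> \<Longrightarrow> (\<Sum>(p,q)\<leftarrow>Delta h. \<phi> (mult (S p) q)) = eps h * \<phi> one"
  using arg_cong[OF antipode_left[of h], of \<phi>] by (simp add: lin_sum_pairs lin_scale)

lemma antipode_right_lin: "lin sc \<phi> \<Longrightarrow> (\<Sum>(p,q)\<leftarrow>Delta h. \<phi> (mult p (S q))) = eps h * \<phi> one"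
  using arg_cong[OF antipode_right[of h], of \<phi>] by (simp add: lin_sum_pairs lin_scale)

lemma S_one [simp]: "S one = one"
proof -
  have "(\<Sum>(p,q)\<leftarrow>Delta one. mult (S p) q) = mult (S one) one"
    by (rule Delta_one_sumH) (intro lin_intros)+
  then show ?thesis using antipode_left[of one] by (simp add: hopf_laws)
qed

lemma eps_S: "eps (S h) = eps h"
proof -
  have "eps (S h) = (\<Sum>(p,q)\<leftarrow>Delta h. eps (S p) * eps q)"
    by (rule counit_right_lin[symmetric]) (intro lin_intros)
  also have "\<dots> = eps (\<Sum>(p,q)\<leftarrow>Delta h. mult (S p) q)"
    by (simp add: lin_sum_pairs[OF lin_eps] eps_mult)
  finally show ?thesis
    using antipode_left[of h] lin_scale[OF lin_eps] by simp
qed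

lemma mult_zero [simp]: "mult 0 a = 0" "mult a 0 = 0"
  using mult_addl[of 0 0 a] mult_addr[of a 0 0] by simp_all

lemma mult_sum_pairs_left: "mult (\<Sum>(p,q)\<leftarrow>L. g p q) b = (\<Sum>(p,q)\<leftarrow>L. mult (g p q) b)"
  by (induction L) (auto simp: mult_addl)

lemma mult_sum_pairs_right: "mult b (\<Sum>(p,q)\<leftarrow>L. g p q) = (\<Sum>(p,q)\<leftarrow>L. mult b (g p q))"
  by (induction L) (auto simp: mult_addr)

text \<open>The classical argument: both sides are the value of
  \<open>S(a\<^sub>1b\<^sub>1) a\<^sub>2b\<^sub>2 S(b\<^sub>3) S(a\<^sub>3)\<close>, evaluated once from the left and once from the right.\<close>

lemma S_mult: "S (mult a b) = mult (S b) (S a)"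
proof (rule eq_by_lin)
  fix \<phi> assume p: "lin sc \<phi>"
  note lp = lin_comp_linH[OF p]
  define \<Psi> where "\<Psi> a1 a2 a3 b1 b2 b3 =
    \<phi> (mult (S (mult a1 b1)) (mult (mult a2 b2) (mult (S b3) (S a3))))" for a1 a2 a3 b1 b2 b3
  define Q where "Q = (\<Sum>(a1,a')\<leftarrow>Delta a. \<Sum>(a2,a3)\<leftarrow>Delta a'. \<Sum>(b1,b')\<leftarrow>Delta b.
    \<Sum>(b2,b3)\<leftarrow>Delta b'. \<Psi> a1 a2 a3 b1 b2 b3)"
  have collapse_b23: "(\<Sum>(b2,b3)\<leftarrow>Delta b'. \<Psi> a1 a2 a3 b1 b2 b3)
      = \<phi> (mult (S (mult a1 b1)) (mult a2 (S a3))) * eps b'" for a1 a2 a3 b1 b'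
  proof -
    have "(\<Sum>(b2,b3)\<leftarrow>Delta b'. \<Psi> a1 a2 a3 b1 b2 b3)
        = (\<Sum>(b2,b3)\<leftarrow>Delta b'. (\<lambda>z. \<phi> (mult (S (mult a1 b1)) (mult a2 (mult z (S a3))))) (mult b2 (S b3)))"
      unfolding \<Psi>_def by (simp add: mult_assoc)
    also have "\<dots> = eps b' * \<phi> (mult (S (mult a1 b1)) (mult a2 (mult one (S a3))))"
      by (rule antipode_right_lin) (intro lin_intros lp)
    finally show ?thesis by simp
  qed
  have collapse_b1: "(\<Sum>(b1,b')\<leftarrow>Delta b. \<phi> (mult (S (mult a1 b1)) Y) * eps b') = \<phi> (mult (S (mult a1 b)) Y)"
    for a1 Y
    by (rule counit_right_lin) (intro lin_intros lp)
  have collapse_a23: "(\<Sum>(a2,a3)\<leftarrow>Delta a'. \<phi> (mult (S (mult a1 b)) (mult a2 (S a3))))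
      = \<phi> (S (mult a1 b)) * eps a'" for a1 a'
    using antipode_right_lin[of "\<lambda>z. \<phi> (mult (S (mult a1 b)) z)" a'] by (simp add: lp lin_intros)
  have collapse_a1: "(\<Sum>(a1,a')\<leftarrow>Delta a. \<phi> (S (mult a1 b)) * eps a') = \<phi> (S (mult a b))"
    by (rule counit_right_lin) (intro lin_intros lp)
  have Q_left: "Q = \<phi> (S (mult a b))"
    unfolding Q_def collapse_b23 by (simp add: collapse_b1 collapse_a23 collapse_a1)
  have coassoc_a: "Q = (\<Sum>(a'',a3)\<leftarrow>Delta a. \<Sum>(a1,a2)\<leftarrow>Delta a''. \<Sum>(b1,b')\<leftarrow>Delta b.
      \<Sum>(b2,b3)\<leftarrow>Delta b'. \<Psi> a1 a2 a3 b1 b2 b3)"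
    unfolding Q_def \<Psi>_def by (rule coassoc[symmetric]) (intro lin_intros lp)+
  have coassoc_b: "(\<Sum>(b1,b')\<leftarrow>Delta b. \<Sum>(b2,b3)\<leftarrow>Delta b'. \<Psi> a1 a2 a3 b1 b2 b3)
      = (\<Sum>(b'',b3)\<leftarrow>Delta b. \<Sum>(b1,b2)\<leftarrow>Delta b''. \<Psi> a1 a2 a3 b1 b2 b3)" for a1 a2 a3
    unfolding \<Psi>_def by (rule coassoc[symmetric]) (intro lin_intros lp)+
  have inner: "(\<Sum>(a1,a2)\<leftarrow>Delta a''. \<Sum>(b1,b2)\<leftarrow>Delta b''. \<Psi> a1 a2 a3 b1 b2 b3)
      = eps a'' * (eps b'' * \<phi> (mult (S b3) (S a3)))" for a'' b'' a3 b3
  proof -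
    have "(\<Sum>(a1,a2)\<leftarrow>Delta a''. \<Sum>(b1,b2)\<leftarrow>Delta b''. \<Psi> a1 a2 a3 b1 b2 b3)
       = \<phi> (mult (\<Sum>(a1,a2)\<leftarrow>Delta a''. \<Sum>(b1,b2)\<leftarrow>Delta b''. mult (S (mult a1 b1)) (mult a2 b2))
              (mult (S b3) (S a3)))"
      unfolding \<Psi>_def by (simp add: mult_sum_pairs_left lin_sum_pairs[OF p] mult_assoc)
    also have "(\<Sum>(a1,a2)\<leftarrow>Delta a''. \<Sum>(b1,b2)\<leftarrow>Delta b''. mult (S (mult a1 b1)) (mult a2 b2))
        = (\<Sum>(p,q)\<leftarrow>Delta (mult a'' b''). mult (S p) q)"
      by (rule Delta_mult_sumH[symmetric]) (intro lin_intros)+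
    also have "\<dots> = sc (eps a'' * eps b'') one"
      by (simp add: antipode_left eps_mult)
    finally show ?thesis by (simp add: mult_scalel lin_scale[OF p])
  qed
  have "Q = (\<Sum>(a'',a3)\<leftarrow>Delta a. \<Sum>(b'',b3)\<leftarrow>Delta b. \<Sum>(a1,a2)\<leftarrow>Delta a''.
      \<Sum>(b1,b2)\<leftarrow>Delta b''. \<Psi> a1 a2 a3 b1 b2 b3)"
    unfolding coassoc_a coassoc_b by (intro sum_pairs_cong) (rule sum_pairs_swap)
  also have "\<dots> = (\<Sum>(a'',a3)\<leftarrow>Delta a. eps a'' * (\<Sum>(b'',b3)\<leftarrow>Delta b. eps b'' * \<phi> (mult (S b3) (S a3))))"
    by (simp add: inner sum_pairs_const_mult)
  also have "\<dots> = (\<Sum>(a'',a3)\<leftarrow>Delta a. eps a'' * \<phi> (mult (S b) (S a3)))"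
    by (subst counit_left_lin) (intro lin_intros lp, rule refl)
  also have "\<dots> = \<phi> (mult (S b) (S a))"
    by (rule counit_left_lin) (intro lin_intros lp)
  finally show "\<phi> (S (mult a b)) = \<phi> (mult (S b) (S a))"
    using Q_left by simp
qed

lemma sum_Delta_twisted_antipode:
  assumes g1: "\<And>b. lin sc (\<lambda>a. G a b)" and g2: "\<And>a. lin sc (\<lambda>b. G a b)"
  shows "(\<Sum>(t,w)\<leftarrow>Delta k. \<Sum>(t1,t2)\<leftarrow>Delta t. \<Sum>(w1,w2)\<leftarrow>Delta w. G (mult t1 (S w2)) (mult t2 (S w1)))
     = eps k * G one one"
proof -
  note L = lin_comp_linH[OF g1] lin_comp_linH[OF g2]
  have "(\<Sum>(t,w)\<leftarrow>Delta k. \<Sum>(t1,t2)\<leftarrow>Delta t. \<Sum>(w1,w2)\<leftarrow>Delta w. G (mult t1 (S w2)) (mult t2 (S w1)))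
     = (\<Sum>(t1,c)\<leftarrow>Delta k. \<Sum>(t2,w)\<leftarrow>Delta c. \<Sum>(w1,w2)\<leftarrow>Delta w. G (mult t1 (S w2)) (mult t2 (S w1)))"
    by (rule coassoc) (intro lin_intros L)+
  also have "\<dots> = (\<Sum>(t1,c)\<leftarrow>Delta k. \<Sum>(e,w2)\<leftarrow>Delta c. \<Sum>(t2,w1)\<leftarrow>Delta e.
      G (mult t1 (S w2)) (mult t2 (S w1)))"
    by (intro sum_pairs_cong coassoc[symmetric]) (intro lin_intros L)+
  also have "\<dots> = (\<Sum>(t1,c)\<leftarrow>Delta k. \<Sum>(e,w2)\<leftarrow>Delta c. eps e * G (mult t1 (S w2)) one)"
    by (intro sum_pairs_cong antipode_right_lin) (intro lin_intros L)
  also have "\<dots> = (\<Sum>(t1,c)\<leftarrow>Delta k. G (mult t1 (S c)) one)"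
    by (intro sum_pairs_cong counit_left_lin) (intro lin_intros L)
  also have "\<dots> = eps k * G one one"
    using antipode_right_lin[of "\<lambda>z. G z one" k] by (simp add: g1)
  finally show ?thesis .
qed

lemma sum_Delta_antipode_left:
  assumes g1: "\<And>b. lin sc (\<lambda>a. G a b)" and g2: "\<And>a. lin sc (\<lambda>b. G a b)"
  shows "(\<Sum>(h1,t)\<leftarrow>Delta j. \<Sum>(s1,s2)\<leftarrow>Delta (S h1). \<Sum>(t1,t2)\<leftarrow>Delta t. G (mult s1 t1) (mult s2 t2))
     = eps j * G one one"
proof -
  have "(\<Sum>(h1,t)\<leftarrow>Delta j. \<Sum>(s1,s2)\<leftarrow>Delta (S h1). \<Sum>(t1,t2)\<leftarrow>Delta t. G (mult s1 t1) (mult s2 t2))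
      = (\<Sum>(h1,t)\<leftarrow>Delta j. (\<lambda>z. \<Sum>(p,q)\<leftarrow>Delta z. G p q) (mult (S h1) t))"
    by (intro sum_pairs_cong) (simp add: Delta_mult_sum[OF g1 g2])
  also have "\<dots> = eps j * (\<Sum>(p,q)\<leftarrow>Delta one. G p q)"
    by (rule antipode_left_lin) (intro lin_sum_Delta g1 g2)
  also have "\<dots> = eps j * G one one"
    by (simp add: Delta_one_sum[OF g1 g2])
  finally show ?thesis .
qed

text \<open>Anti-comultiplicativity of S: both sides equal the sum over
  \<open>S(h\<^sub>1)\<^sub>1 h\<^sub>2 S(h\<^sub>5) \<otimes> S(h\<^sub>1)\<^sub>2 h\<^sub>3 S(h\<^sub>4)\<close>, collapsed in two different ways.\<close>

lemma Delta_S: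
  assumes f1: "\<And>b. lin sc (\<lambda>a. F a b)" and f2: "\<And>a. lin sc (\<lambda>b. F a b)"
  shows "(\<Sum>(p,q)\<leftarrow>Delta (S h). F p q) = (\<Sum>(p,q)\<leftarrow>Delta h. F (S q) (S p))"
proof -
  note L = lin_comp_linH[OF f1] lin_comp_linH[OF f2]
  define \<Phi> where "\<Phi> h1 t w = (\<Sum>(s1,s2)\<leftarrow>Delta (S h1). \<Sum>(t1,t2)\<leftarrow>Delta t. \<Sum>(w1,w2)\<leftarrow>Delta w.
      F (mult (mult s1 t1) (S w2)) (mult (mult s2 t2) (S w1)))" for h1 t w
  have collapse_tw: "(\<Sum>(t,w)\<leftarrow>Delta k. \<Phi> h1 t w) = (\<Sum>(s1,s2)\<leftarrow>Delta (S h1). F s1 s2) * eps k" for h1 k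
  proof -
    have "(\<Sum>(t,w)\<leftarrow>Delta k. \<Phi> h1 t w) = (\<Sum>(s1,s2)\<leftarrow>Delta (S h1). \<Sum>(t,w)\<leftarrow>Delta k.
      \<Sum>(t1,t2)\<leftarrow>Delta t. \<Sum>(w1,w2)\<leftarrow>Delta w. F (mult s1 (mult t1 (S w2))) (mult s2 (mult t2 (S w1))))"
      unfolding \<Phi>_def by (simp add: sum_pairs_swap[where A="Delta k"] mult_assoc)
    also have "\<dots> = (\<Sum>(s1,s2)\<leftarrow>Delta (S h1). eps k * F (mult s1 one) (mult s2 one))"
      by (intro sum_pairs_cong sum_Delta_twisted_antipode) (intro lin_intros L)+
    finally show ?thesis by (simp add: sum_pairs_const_mult mult.commute)
  qed
  have collapse_ht: "(\<Sum>(h1,t)\<leftarrow>Delta j. \<Phi> h1 t w) = eps j * (\<Sum>(w1,w2)\<leftarrow>Delta w. F (S w2) (S w1))"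
    for j w
  proof -
    have "(\<Sum>(h1,t)\<leftarrow>Delta j. \<Phi> h1 t w) = (\<Sum>(w1,w2)\<leftarrow>Delta w. \<Sum>(h1,t)\<leftarrow>Delta j.
      \<Sum>(s1,s2)\<leftarrow>Delta (S h1). \<Sum>(t1,t2)\<leftarrow>Delta t. F (mult (mult s1 t1) (S w2)) (mult (mult s2 t2) (S w1)))"
      unfolding \<Phi>_def by (rule sum_pairs_pull3)
    also have "\<dots> = (\<Sum>(w1,w2)\<leftarrow>Delta w. eps j * F (mult one (S w2)) (mult one (S w1)))"
      by (intro sum_pairs_cong sum_Delta_antipode_left) (intro lin_intros L)+
    finally show ?thesis by (simp add: sum_pairs_const_mult)
  qed
  have "(\<Sum>(p,q)\<leftarrow>Delta (S h). F p q) = (\<Sum>(h1,k)\<leftarrow>Delta h. \<Sum>(t,w)\<leftarrow>Delta k. \<Phi> h1 t w)"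
    unfolding collapse_tw by (rule counit_right_lin[symmetric]) (intro lin_intros f1 f2)
  also have "\<dots> = (\<Sum>(j,w)\<leftarrow>Delta h. \<Sum>(h1,t)\<leftarrow>Delta j. \<Phi> h1 t w)"
    unfolding \<Phi>_def by (rule coassoc[symmetric]) (intro lin_intros L)+
  also have "\<dots> = (\<Sum>(w1,w2)\<leftarrow>Delta h. F (S w2) (S w1))"
    unfolding collapse_ht by (rule counit_left_lin) (intro lin_intros L)
  finally show ?thesis .
qed

definition T where "T = inv S"

lemma S_T [simp]: "S (T x) = x"
  unfolding T_def using bij_S by (simp add: bij_is_surj surj_f_inv_f)

lemma T_S [simp]: "T (S x) = x"
  unfolding T_def using bij_S by (simp add: bij_is_inj inv_f_f)

lemma S_inj: "S x = S y \<Longrightarrow> x = y"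
  using T_S by metis

lemma linH_T [lin_intros]: "linH sc g \<Longrightarrow> linH sc (\<lambda>h. T (g h))"
  unfolding linH_def by (metis S_T S_inj linH_add[OF linH_S] linH_scale[OF linH_S])

lemma T_one [simp]: "T one = one"
  by (rule S_inj) simp

lemma T_mult: "T (mult a b) = mult (T b) (T a)"
  by (rule S_inj) (simp add: S_mult)

lemma eps_T: "eps (T h) = eps h"
  using eps_S[of "T h"] by simp

lemma antipode_T: "(\<Sum>(p,q)\<leftarrow>Delta z. mult (T q) p) = sc (eps z) one"
  by (rule S_inj) (simp add: linH_sum_pairs[OF linH_S] S_mult linH_scale[OF linH_S] antipode_left)

lemma Delta_T:
  assumes f1: "\<And>b. lin sc (\<lambda>a. F a b)" and f2: "\<And>a. lin sc (\<lambda>b. F a b)"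
  shows "(\<Sum>(p,q)\<leftarrow>Delta (T x). F p q) = (\<Sum>(p,q)\<leftarrow>Delta x. F (T q) (T p))"
proof -
  have "(\<Sum>(p,q)\<leftarrow>Delta (S (T x)). F (T q) (T p)) = (\<Sum>(p,q)\<leftarrow>Delta (T x). F (T (S p)) (T (S q)))"
    by (rule Delta_S) (intro lin_comp_linH[OF f1] lin_comp_linH[OF f2] lin_intros)+
  then show ?thesis by simp
qed

definition Delta_in :: "'h set \<Rightarrow> 'h \<Rightarrow> ('h \<times> 'h) list" where
  "Delta_in Y x = (SOME L. set L \<subseteq> Y \<times> Y \<and> teq2 sc L (Delta x))"

context
  fixes Y assumes Y: "sub_hopf sc mult one Delta S Y"
begin

lemma sub_hopf_mult: "a \<in> Y \<Longrightarrow> b \<in> Y \<Longrightarrow> mult a b \<in> Y"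
  using Y unfolding sub_hopf_def by blast

lemma sub_hopf_T: "a \<in> Y \<Longrightarrow> T a \<in> Y"
  using Y unfolding sub_hopf_def by (metis T_S imageE)

lemma Delta_in: "x \<in> Y \<Longrightarrow> set (Delta_in Y x) \<subseteq> Y \<times> Y \<and> teq2 sc (Delta_in Y x) (Delta x)"
  unfolding Delta_in_def
  by (rule someI_ex) (use Y in \<open>auto simp: sub_hopf_def\<close>)

lemma Delta_in_mem: "x \<in> Y \<Longrightarrow> (p,q) \<in> set (Delta_in Y x) \<Longrightarrow> p \<in> Y \<and> q \<in> Y"
  using Delta_in by blast

lemma sum_Delta_in:
  assumes "x \<in> Y" "\<And>b. lin sc (\<lambda>a. G a b)" "\<And>a. lin sc (\<lambda>b. G a b)"
    and "\<And>p q. p \<in> Y \<Longrightarrow> q \<in> Y \<Longrightarrow> F p q = G p q"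
  shows "(\<Sum>(p,q)\<leftarrow>Delta_in Y x. F p q) = (\<Sum>(p,q)\<leftarrow>Delta x. G p q)"
proof -
  have "(\<Sum>(p,q)\<leftarrow>Delta_in Y x. F p q) = (\<Sum>(p,q)\<leftarrow>Delta_in Y x. G p q)"
    by (rule sum_pairs_cong) (use Delta_in_mem[OF assms(1)] assms(4) in blast)
  also have "\<dots> = (\<Sum>(p,q)\<leftarrow>Delta x. G p q)"
    using teq2_sum[OF conjunct2[OF Delta_in[OF assms(1)]] assms(2,3)] .
  finally show ?thesis .
qed

end

end

section \<open>Coquasitriangular Hopf algebras and the functionals l, r\<close>

locale cqt_hopf = hopf sc mult one Delta eps S
  for sc :: "'k::field \<Rightarrow> 'h::ab_group_add \<Rightarrow> 'h" and mult one Delta eps S +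
  fixes \<sigma> :: "'h \<Rightarrow> 'h \<Rightarrow> 'k"
  assumes cqt: "cqt sc mult one Delta eps \<sigma>"
begin

lemmas cqt_laws = cqt[unfolded cqt_def]

lemma lin_sigma_left: "lin sc (\<lambda>h. \<sigma> h y)"
  and lin_sigma_right: "lin sc (\<lambda>h. \<sigma> a h)"
  using cqt_laws unfolding bil_def by simp_all

lemma sigma_mult_left: "\<sigma> (mult h h') g = (\<Sum>(g1,g2)\<leftarrow>Delta g. \<sigma> h g1 * \<sigma> h' g2)"
  and sigma_mult_right: "\<sigma> g (mult h h') = (\<Sum>(g1,g2)\<leftarrow>Delta g. \<sigma> g2 h * \<sigma> g1 h')"
  and sigma_one_left [simp]: "\<sigma> one h = eps h"
  and sigma_one_right [simp]: "\<sigma> h one = eps h"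
  and cqt_braiding:
    "(\<Sum>(h1,h2)\<leftarrow>Delta h. \<Sum>(h1',h2')\<leftarrow>Delta h'. sc (\<sigma> h1 h1') (mult h2 h2'))
   = (\<Sum>(h1,h2)\<leftarrow>Delta h. \<Sum>(h1',h2')\<leftarrow>Delta h'. sc (\<sigma> h2 h2') (mult h1' h1))"
  using cqt_laws by simp_all

lemma lin_sigma_left_comp [lin_intros]: "linH sc g \<Longrightarrow> lin sc (\<lambda>h. \<sigma> (g h) y)"
  using lin_comp_linH[OF lin_sigma_left] .

lemma lin_sigma_right_comp [lin_intros]: "linH sc g \<Longrightarrow> lin sc (\<lambda>h. \<sigma> a (g h))"
  using lin_comp_linH[OF lin_sigma_right] .

abbreviation l where "l x \<equiv> lfun \<sigma> x"
abbreviation r where "r a \<equiv> rfun \<sigma> a"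
abbreviation cv :: "('h \<Rightarrow> 'k) \<Rightarrow> ('h \<Rightarrow> 'k) \<Rightarrow> 'h \<Rightarrow> 'k" where "cv \<equiv> conv Delta"

lemma l_apply [simp]: "l x h = \<sigma> h x"
  by (simp add: lfun_def)

lemma r_apply [simp]: "r a h = \<sigma> a h"
  by (simp add: rfun_def)

lemma cv_apply: "cv f g h = (\<Sum>(p,q)\<leftarrow>Delta h. f p * g q)"
  by (simp add: conv_def)

lemma lin_l: "lin sc (l x)"
  using lin_sigma_left by (simp add: lfun_def)

lemma lin_r: "lin sc (r a)"
  using lin_sigma_right by (simp add: rfun_def)

lemma lin_cv: "lin sc f \<Longrightarrow> lin sc g \<Longrightarrow> lin sc (cv f g)"
  unfolding conv_def by (intro lin_sum_Delta lin_mult_const lin_const_mult) (simp_all add: lin_def)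

lemma lin_cv_r_right [lin_intros]: "lin sc (\<lambda>a. cv f (r a) h)"
  and lin_cv_l_right [lin_intros]: "lin sc (\<lambda>y. cv f (l y) h)"
  and lin_cv_r_left [lin_intros]: "lin sc (\<lambda>a. cv (r a) g h)"
  and lin_cv_l_left [lin_intros]: "lin sc (\<lambda>y. cv (l y) g h)"
  unfolding cv_apply l_apply r_apply
  by (intro lin_sum_pairs_fun lin_const_mult lin_mult_const lin_sigma_left lin_sigma_right)+

lemma cv_assoc:
  assumes "lin sc f" "lin sc g" "lin sc k"
  shows "cv (cv f g) k = cv f (cv g k)"
proof
  fix h
  have "cv (cv f g) k h = (\<Sum>(p,q)\<leftarrow>Delta h. \<Sum>(p1,p2)\<leftarrow>Delta p. f p1 * g p2 * k q)"
    by (simp only: cv_apply sum_pairs_mult_const)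
  also have "\<dots> = (\<Sum>(p,q)\<leftarrow>Delta h. \<Sum>(q1,q2)\<leftarrow>Delta q. f p * g q1 * k q2)"
    by (rule coassoc) (intro lin_intros assms)+
  also have "\<dots> = cv f (cv g k) h"
    by (simp only: cv_apply sum_pairs_const_mult mult.assoc)
  finally show "cv (cv f g) k h = cv f (cv g k) h" .
qed

lemma cv_eps_right: "lin sc f \<Longrightarrow> cv f eps = f"
  by (rule ext) (simp only: cv_apply counit_right_lin)

lemma cv_eps_left: "lin sc f \<Longrightarrow> cv eps f = f"
  by (rule ext) (simp only: cv_apply counit_left_lin)

lemma l_mult: "l (mult x y) = cv (l y) (l x)"
  by (rule ext) (simp only: cv_apply l_apply sigma_mult_right mult.commute)

lemma l_one: "l one = eps"
  by (rule ext) simp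

lemma cv_sum_left: "cv (\<lambda>h. \<Sum>(p,q)\<leftarrow>L. G p q h) g = (\<lambda>h. \<Sum>(p,q)\<leftarrow>L. cv (G p q) g h)"
  by (rule ext) (simp only: cv_apply sum_pairs_mult_const sum_pairs_swap[where A="Delta _"])

lemma cv_sum_right: "cv f (\<lambda>h. \<Sum>(p,q)\<leftarrow>L. G p q h) = (\<lambda>h. \<Sum>(p,q)\<leftarrow>L. cv f (G p q) h)"
  by (rule ext) (simp only: cv_apply sum_pairs_const_mult sum_pairs_swap[where A="Delta _"])

lemma cv_scale_left: "cv (\<lambda>h. c * f h) g = (\<lambda>h. c * cv f g h)"
  by (rule ext) (simp only: cv_apply sum_pairs_const_mult mult.assoc)

lemma cv_scale_right: "cv f (\<lambda>h. c * g h) = (\<lambda>h. c * cv f g h)"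
  by (rule ext) (simp only: cv_apply sum_pairs_const_mult mult.left_commute)

text \<open>Apply \<open>\<sigma>(a, -)\<close> to the braiding axiom for \<open>h\<close> and \<open>y\<close>.\<close>

lemma sigma_braiding_exchange:
  "(\<Sum>(a1,a2)\<leftarrow>Delta a. \<Sum>(y1,y2)\<leftarrow>Delta y. \<sigma> a1 y2 * cv (l y1) (r a2) h)
 = (\<Sum>(a1,a2)\<leftarrow>Delta a. \<Sum>(y1,y2)\<leftarrow>Delta y. \<sigma> a2 y1 * cv (r a1) (l y2) h)"
proof -
  have "(\<Sum>(a1,a2)\<leftarrow>Delta a. \<Sum>(y1,y2)\<leftarrow>Delta y. \<sigma> a1 y2 * cv (l y1) (r a2) h)
      = (\<Sum>(a1,a2)\<leftarrow>Delta a. \<Sum>(y1,y2)\<leftarrow>Delta y. \<Sum>(h1,h2)\<leftarrow>Delta h. \<sigma> a1 y2 * (\<sigma> h1 y1 * \<sigma> a2 h2))"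
    by (simp only: cv_apply l_apply r_apply sum_pairs_const_mult)
  also have "\<dots> = (\<Sum>(h1,h2)\<leftarrow>Delta h. \<Sum>(y1,y2)\<leftarrow>Delta y. \<Sum>(a1,a2)\<leftarrow>Delta a. \<sigma> a1 y2 * (\<sigma> h1 y1 * \<sigma> a2 h2))"
    by (rule sum_pairs_reverse3)
  also have "\<dots> = \<sigma> a (\<Sum>(h1,h2)\<leftarrow>Delta h. \<Sum>(y1,y2)\<leftarrow>Delta y. sc (\<sigma> h1 y1) (mult h2 y2))"
    apply (simp only: lin_sum_pairs[OF lin_sigma_right] lin_scale[OF lin_sigma_right] sigma_mult_right
        sum_pairs_const_mult)
    apply (intro sum_pairs_cong)
    apply (simp only: mult.commute mult.left_commute)
    done
  also have "\<dots> = \<sigma> a (\<Sum>(h1,h2)\<leftarrow>Delta h. \<Sum>(y1,y2)\<leftarrow>Delta y. sc (\<sigma> h2 y2) (mult y1 h1))"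
    by (simp only: cqt_braiding)
  also have "\<dots> = (\<Sum>(h1,h2)\<leftarrow>Delta h. \<Sum>(y1,y2)\<leftarrow>Delta y. \<Sum>(a1,a2)\<leftarrow>Delta a. \<sigma> a2 y1 * (\<sigma> a1 h1 * \<sigma> h2 y2))"
    apply (simp only: lin_sum_pairs[OF lin_sigma_right] lin_scale[OF lin_sigma_right] sigma_mult_right
        sum_pairs_const_mult)
    apply (intro sum_pairs_cong)
    apply (simp only: mult.commute mult.left_commute)
    done
  also have "\<dots> = (\<Sum>(a1,a2)\<leftarrow>Delta a. \<Sum>(y1,y2)\<leftarrow>Delta y. \<Sum>(h1,h2)\<leftarrow>Delta h. \<sigma> a2 y1 * (\<sigma> a1 h1 * \<sigma> h2 y2))"
    by (rule sum_pairs_reverse3)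
  also have "\<dots> = (\<Sum>(a1,a2)\<leftarrow>Delta a. \<Sum>(y1,y2)\<leftarrow>Delta y. \<sigma> a2 y1 * cv (r a1) (l y2) h)"
    by (simp only: cv_apply l_apply r_apply sum_pairs_const_mult)
  finally show ?thesis .
qed

lemma sigma_antipode_collapse:
  "(\<Sum>(a1,a2)\<leftarrow>Delta a. \<Sum>(y1,y2)\<leftarrow>Delta y. \<sigma> a2 (S y1) * \<sigma> a1 y2) = eps y * eps a"
proof -
  have "(\<Sum>(a1,a2)\<leftarrow>Delta a. \<Sum>(y1,y2)\<leftarrow>Delta y. \<sigma> a2 (S y1) * \<sigma> a1 y2)
      = (\<Sum>(y1,y2)\<leftarrow>Delta y. \<sigma> a (mult (S y1) y2))"
    by (rule trans[OF sum_pairs_swap], intro sum_pairs_cong, simp only: sigma_mult_right)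
  also have "\<dots> = \<sigma> a (\<Sum>(y1,y2)\<leftarrow>Delta y. mult (S y1) y2)"
    by (simp only: lin_sum_pairs[OF lin_sigma_right])
  also have "\<dots> = eps y * eps a"
    by (simp add: antipode_left lin_scale[OF lin_sigma_right])
  finally show ?thesis .
qed

text \<open>The commutation relation
  \<open>r\<^sub>a l\<^sub>y = \<sigma>(a\<^sub>3, S y\<^sub>1) \<sigma>(a\<^sub>1, y\<^sub>3) l\<^bsub>y\<^sub>2\<^esub> r\<^bsub>a\<^sub>2\<^esub>\<close> in \<open>H\<^sup>0\<close>:
  exchange the middle factors, then the outer ones cancel by the antipode.\<close>

lemma r_l_commute:
  "cv (r a) (l y) h = (\<Sum>(a1,a')\<leftarrow>Delta a. \<Sum>(a2,a3)\<leftarrow>Delta a'. \<Sum>(y1,y')\<leftarrow>Delta y. \<Sum>(y2,y3)\<leftarrow>Delta y'.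
      \<sigma> a3 (S y1) * \<sigma> a1 y3 * cv (l y2) (r a2) h)"
proof -
  have "(\<Sum>(a1,a')\<leftarrow>Delta a. \<Sum>(a2,a3)\<leftarrow>Delta a'. \<Sum>(y1,y')\<leftarrow>Delta y. \<Sum>(y2,y3)\<leftarrow>Delta y'.
      \<sigma> a3 (S y1) * \<sigma> a1 y3 * cv (l y2) (r a2) h)
    = (\<Sum>(a'',a3)\<leftarrow>Delta a. \<Sum>(a1,a2)\<leftarrow>Delta a''. \<Sum>(y1,y')\<leftarrow>Delta y. \<Sum>(y2,y3)\<leftarrow>Delta y'.
      \<sigma> a3 (S y1) * \<sigma> a1 y3 * cv (l y2) (r a2) h)"
    by (rule coassoc[symmetric]) (intro lin_intros; (intro lin_intros)?)+
  also have "\<dots> = (\<Sum>(a'',a3)\<leftarrow>Delta a. \<Sum>(y1,y')\<leftarrow>Delta y. \<sigma> a3 (S y1) *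
      (\<Sum>(a1,a2)\<leftarrow>Delta a''. \<Sum>(y2,y3)\<leftarrow>Delta y'. \<sigma> a1 y3 * cv (l y2) (r a2) h))"
    by (intro sum_pairs_cong, rule trans[OF sum_pairs_swap]) (simp only: sum_pairs_const_mult mult.assoc)
  also have "\<dots> = (\<Sum>(a'',a3)\<leftarrow>Delta a. \<Sum>(y1,y')\<leftarrow>Delta y. \<sigma> a3 (S y1) *
      (\<Sum>(a1,a2)\<leftarrow>Delta a''. \<Sum>(y2,y3)\<leftarrow>Delta y'. \<sigma> a2 y2 * cv (r a1) (l y3) h))"
    by (intro sum_pairs_cong arg_cong2[where f="(*)"] refl sigma_braiding_exchange)
  also have "\<dots> = (\<Sum>(a'',a3)\<leftarrow>Delta a. \<Sum>(a1,a2)\<leftarrow>Delta a''. \<Sum>(y1,y')\<leftarrow>Delta y. \<Sum>(y2,y3)\<leftarrow>Delta y'.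
      \<sigma> a3 (S y1) * (\<sigma> a2 y2 * cv (r a1) (l y3) h))"
    by (intro sum_pairs_cong, simp only: sum_pairs_const_mult, rule sum_pairs_swap)
  also have "\<dots> = (\<Sum>(a1,a')\<leftarrow>Delta a. \<Sum>(a2,a3)\<leftarrow>Delta a'. \<Sum>(y1,y')\<leftarrow>Delta y. \<Sum>(y2,y3)\<leftarrow>Delta y'.
      \<sigma> a3 (S y1) * (\<sigma> a2 y2 * cv (r a1) (l y3) h))"
    by (rule coassoc) (intro lin_intros; (intro lin_intros)?)+
  also have "\<dots> = (\<Sum>(a1,a')\<leftarrow>Delta a. \<Sum>(a2,a3)\<leftarrow>Delta a'. \<Sum>(y'',y3)\<leftarrow>Delta y. \<Sum>(y1,y2)\<leftarrow>Delta y''.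
      \<sigma> a3 (S y1) * (\<sigma> a2 y2 * cv (r a1) (l y3) h))"
    by (intro sum_pairs_cong coassoc[symmetric]) (intro lin_intros; (intro lin_intros)?)+
  also have "\<dots> = (\<Sum>(a1,a')\<leftarrow>Delta a. \<Sum>(y'',y3)\<leftarrow>Delta y. cv (r a1) (l y3) h *
      (\<Sum>(a2,a3)\<leftarrow>Delta a'. \<Sum>(y1,y2)\<leftarrow>Delta y''. \<sigma> a3 (S y1) * \<sigma> a2 y2))"
    by (intro sum_pairs_cong, rule trans[OF sum_pairs_swap], intro sum_pairs_cong,
        simp only: sum_pairs_const_mult, intro sum_pairs_cong, simp only: mult_ac)
  also have "\<dots> = (\<Sum>(a1,a')\<leftarrow>Delta a. (\<Sum>(y'',y3)\<leftarrow>Delta y. eps y'' * cv (r a1) (l y3) h) * eps a')"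
    by (simp only: sigma_antipode_collapse, simp only: sum_pairs_mult_const sum_pairs_const_mult mult_ac)
  also have "\<dots> = cv (r a) (l y) h"
    by (simp only: counit_left_lin[OF lin_cv_l_right] counit_right_lin[OF lin_cv_r_left])
  finally show ?thesis by simp
qed

text \<open>The exchange relation
  \<open>l\<^bsub>T x\<^esub> n = n\<^sub>3(x\<^sub>1) n\<^sub>1(T x\<^sub>3) n\<^sub>2 l\<^bsub>T x\<^sub>2\<^esub>\<close> (with \<open>T = S\<^sup>-\<^sup>1\<close>)
  of the generalized double, evaluated at \<open>u\<close>: the braiding axiom moves \<open>\<sigma>\<close> across \<open>n\<close>,
  using that \<open>T\<close> is an anti-coalgebra map, and then \<open>T(x\<^sub>2) x\<^sub>1\<close> cancels by the antipode.\<close>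

lemma l_T_exchange:
  assumes n: "lin sc n"
  shows "(\<Sum>(b,c)\<leftarrow>Delta u. \<Sum>(x1,q)\<leftarrow>Delta x. \<Sum>(x2,x3)\<leftarrow>Delta q. n (mult (mult (T x3) b) x1) * \<sigma> c (T x2))
       = cv (l (T x)) n u"
proof -
  note ln = lin_comp_linH[OF n]
  have braid: "(\<Sum>(x2,x3)\<leftarrow>Delta q. \<Sum>(b,c)\<leftarrow>Delta u. n (mult (mult (T x3) b) x1) * \<sigma> c (T x2))
      = (\<Sum>(b,c)\<leftarrow>Delta u. \<Sum>(x2,x3)\<leftarrow>Delta q. \<sigma> b (T x3) * n (mult (mult c (T x2)) x1))" for q x1
  proof -
    have "(\<Sum>(x2,x3)\<leftarrow>Delta q. \<Sum>(b,c)\<leftarrow>Delta u. n (mult (mult (T x3) b) x1) * \<sigma> c (T x2))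
        = (\<Sum>(g1,g2)\<leftarrow>Delta (T q). \<Sum>(b,c)\<leftarrow>Delta u. n (mult (mult g1 b) x1) * \<sigma> c g2)"
      by (rule Delta_T[symmetric]) (intro lin_intros ln)+
    also have "\<dots> = n (mult (\<Sum>(b,c)\<leftarrow>Delta u. \<Sum>(g1,g2)\<leftarrow>Delta (T q). sc (\<sigma> c g2) (mult g1 b)) x1)"
      by (simp only: mult_sum_pairs_left lin_sum_pairs[OF n] mult_scalel lin_scale[OF n]
          mult.commute[of "\<sigma> _ _"] sum_pairs_swap[where A="Delta (T q)"])
    also have "\<dots> = n (mult (\<Sum>(b,c)\<leftarrow>Delta u. \<Sum>(g1,g2)\<leftarrow>Delta (T q). sc (\<sigma> b g1) (mult c g2)) x1)"
      by (simp only: cqt_braiding)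
    also have "\<dots> = (\<Sum>(b,c)\<leftarrow>Delta u. \<Sum>(g1,g2)\<leftarrow>Delta (T q). \<sigma> b g1 * n (mult (mult c g2) x1))"
      by (simp only: mult_sum_pairs_left lin_sum_pairs[OF n] mult_scalel lin_scale[OF n])
    also have "\<dots> = (\<Sum>(b,c)\<leftarrow>Delta u. \<Sum>(x2,x3)\<leftarrow>Delta q. \<sigma> b (T x3) * n (mult (mult c (T x2)) x1))"
      by (intro sum_pairs_cong Delta_T) (intro lin_intros ln)+
    finally show ?thesis .
  qed
  have antipode: "(\<Sum>(x1,x2)\<leftarrow>Delta p. \<sigma> b (T x3) * n (mult (mult c (T x2)) x1)) = eps p * (\<sigma> b (T x3) * n c)"
    for b c p x3
  proof -
    have "(\<Sum>(x1,x2)\<leftarrow>Delta p. \<sigma> b (T x3) * n (mult (mult c (T x2)) x1))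
        = \<sigma> b (T x3) * n (mult c (\<Sum>(x1,x2)\<leftarrow>Delta p. mult (T x2) x1))"
      by (simp only: mult_sum_pairs_right lin_sum_pairs[OF n] sum_pairs_const_mult mult_assoc)
    then show ?thesis
      by (simp add: antipode_T mult_scaler lin_scale[OF n])
  qed
  have "(\<Sum>(b,c)\<leftarrow>Delta u. \<Sum>(x1,q)\<leftarrow>Delta x. \<Sum>(x2,x3)\<leftarrow>Delta q. n (mult (mult (T x3) b) x1) * \<sigma> c (T x2))
      = (\<Sum>(x1,q)\<leftarrow>Delta x. \<Sum>(x2,x3)\<leftarrow>Delta q. \<Sum>(b,c)\<leftarrow>Delta u. n (mult (mult (T x3) b) x1) * \<sigma> c (T x2))"
    by (rule sum_pairs_pull2[symmetric])
  also have "\<dots> = (\<Sum>(x1,q)\<leftarrow>Delta x. \<Sum>(b,c)\<leftarrow>Delta u. \<Sum>(x2,x3)\<leftarrow>Delta q.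
      \<sigma> b (T x3) * n (mult (mult c (T x2)) x1))"
    by (intro sum_pairs_cong braid)
  also have "\<dots> = (\<Sum>(b,c)\<leftarrow>Delta u. \<Sum>(p,x3)\<leftarrow>Delta x. \<Sum>(x1,x2)\<leftarrow>Delta p.
      \<sigma> b (T x3) * n (mult (mult c (T x2)) x1))"
    by (rule trans[OF sum_pairs_swap], intro sum_pairs_cong coassoc[symmetric]) (intro lin_intros ln)+
  also have "\<dots> = (\<Sum>(b,c)\<leftarrow>Delta u. \<Sum>(p,x3)\<leftarrow>Delta x. eps p * (\<sigma> b (T x3) * n c))"
    by (simp only: antipode)
  also have "\<dots> = cv (l (T x)) n u"
    unfolding cv_apply l_apply by (intro sum_pairs_cong counit_left_lin) (intro lin_intros)
  finally show ?thesis .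
qed

end

section \<open>The sub-Hopf algebra \<open>H\<^bsub>X,A\<^esub>\<close> of the finite dual\<close>

locale cqt_HXA = cqt_hopf sc mult one Delta eps S \<sigma>
  for sc :: "'k::field \<Rightarrow> 'h::ab_group_add \<Rightarrow> 'h" and mult one Delta eps S \<sigma> +
  fixes X A :: "'h set"
  assumes X: "sub_hopf sc mult one Delta S X" and A: "sub_hopf sc mult one Delta S A"
begin

abbreviation U where "U \<equiv> HXA Delta \<sigma> X A"

lemma U_iff: "f \<in> U \<longleftrightarrow> (\<exists>L. (\<forall>(c,x,a)\<in>set L. x \<in> X \<and> a \<in> A) \<and>
    f = (\<lambda>h. \<Sum>(c,x,a)\<leftarrow>L. c * cv (l x) (r a) h))"
  unfolding HXA_def by simp

lemma U_lin: assumes "f \<in> U" shows "lin sc f"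
proof -
  obtain L where f: "f = (\<lambda>h. \<Sum>(c,x,a)\<leftarrow>L. c * cv (l x) (r a) h)"
    using assms U_iff by blast
  have "lin sc (\<lambda>h. \<Sum>t\<leftarrow>L. (case t of (c,x,a) \<Rightarrow> c * cv (l x) (r a) h))"
    by (rule lin_sum_list) (auto split: prod.splits intro!: lin_const_mult lin_cv lin_l lin_r)
  then show ?thesis unfolding f by (simp add: case_prod_beta')
qed

lemma U_lr: "x \<in> X \<Longrightarrow> a \<in> A \<Longrightarrow> cv (l x) (r a) \<in> U"
  unfolding U_iff by (rule exI[of _ "[(1,x,a)]"]) auto

lemma U_scale: assumes "f \<in> U" shows "(\<lambda>h. c * f h) \<in> U"
proof -
  obtain L where L: "\<forall>(c,x,a)\<in>set L. x \<in> X \<and> a \<in> A" "f = (\<lambda>h. \<Sum>(c,x,a)\<leftarrow>L. c * cv (l x) (r a) h)"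
    using assms U_iff by blast
  let ?L' = "map (\<lambda>(c',x,a). (c * c', x, a)) L"
  have "c * (\<Sum>(c',x,a)\<leftarrow>L. c' * cv (l x) (r a) h) = (\<Sum>(c',x,a)\<leftarrow>?L'. c' * cv (l x) (r a) h)" for h
    by (induction L) (auto simp: algebra_simps)
  then show ?thesis
    unfolding U_iff using L by (intro exI[of _ ?L']) auto
qed

lemma U_add: assumes "f \<in> U" "g \<in> U" shows "(\<lambda>h. f h + g h) \<in> U"
proof -
  obtain L where L: "\<forall>(c,x,a)\<in>set L. x \<in> X \<and> a \<in> A" "f = (\<lambda>h. \<Sum>(c,x,a)\<leftarrow>L. c * cv (l x) (r a) h)"
    using assms(1) U_iff by blast
  obtain M where M: "\<forall>(c,x,a)\<in>set M. x \<in> X \<and> a \<in> A" "g = (\<lambda>h. \<Sum>(c,x,a)\<leftarrow>M. c * cv (l x) (r a) h)"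
    using assms(2) U_iff by blast
  show ?thesis unfolding U_iff
    by (rule exI[of _ "L @ M"]) (use L M in auto)
qed

lemma U_sum: "(\<And>i. i \<in> set L \<Longrightarrow> F i \<in> U) \<Longrightarrow> (\<lambda>h. \<Sum>i\<leftarrow>L. F i h) \<in> U"
proof (induction L)
  case Nil
  show ?case unfolding U_iff by (rule exI[of _ "[]"]) simp
next
  case (Cons i L)
  then show ?case using U_add[of "F i" "\<lambda>h. \<Sum>i\<leftarrow>L. F i h"] by simp
qed

lemma U_sum_pairs: "(\<And>p q. (p,q) \<in> set L \<Longrightarrow> G p q \<in> U) \<Longrightarrow> (\<lambda>h. \<Sum>(p,q)\<leftarrow>L. G p q h) \<in> U"
  using U_sum[of L "\<lambda>(p,q). G p q"] by (auto simp: case_prod_beta')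

lemma r_l_commute_in:
  assumes a: "a \<in> A" and w: "w \<in> X"
  shows "cv (r a) (l w) = (\<lambda>h. \<Sum>(a1,a')\<leftarrow>Delta_in A a. \<Sum>(a2,a3)\<leftarrow>Delta_in A a'.
      \<Sum>(y1,y')\<leftarrow>Delta_in X w. \<Sum>(y2,y3)\<leftarrow>Delta_in X y'. \<sigma> a3 (S y1) * \<sigma> a1 y3 * cv (l y2) (r a2) h)"
proof
  fix h
  have "(\<Sum>(a1,a')\<leftarrow>Delta_in A a. \<Sum>(a2,a3)\<leftarrow>Delta_in A a'. \<Sum>(y1,y')\<leftarrow>Delta_in X w. \<Sum>(y2,y3)\<leftarrow>Delta_in X y'.
      \<sigma> a3 (S y1) * \<sigma> a1 y3 * cv (l y2) (r a2) h)
    = (\<Sum>(a1,a')\<leftarrow>Delta a. \<Sum>(a2,a3)\<leftarrow>Delta a'. \<Sum>(y1,y')\<leftarrow>Delta w. \<Sum>(y2,y3)\<leftarrow>Delta y'.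
      \<sigma> a3 (S y1) * \<sigma> a1 y3 * cv (l y2) (r a2) h)"
    by (intro sum_Delta_in[OF A a] sum_Delta_in[OF A] sum_Delta_in[OF X w] sum_Delta_in[OF X] refl;
        (intro lin_intros; (intro lin_intros)?)?)
  then show "cv (r a) (l w) h = (\<lambda>h. \<Sum>(a1,a')\<leftarrow>Delta_in A a. \<Sum>(a2,a3)\<leftarrow>Delta_in A a'.
      \<Sum>(y1,y')\<leftarrow>Delta_in X w. \<Sum>(y2,y3)\<leftarrow>Delta_in X y'. \<sigma> a3 (S y1) * \<sigma> a1 y3 * cv (l y2) (r a2) h) h"
    using r_l_commute by simp
qed

lemma U_lr_l:
  assumes x: "x \<in> X" and a: "a \<in> A" and w: "w \<in> X"
  shows "cv (cv (l x) (r a)) (l w) \<in> U"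
proof -
  have "cv (cv (l x) (r a)) (l w) = cv (l x) (cv (r a) (l w))"
    by (rule cv_assoc) (rule lin_l lin_r)+
  also have "\<dots> = (\<lambda>h. \<Sum>(a1,a')\<leftarrow>Delta_in A a. \<Sum>(a2,a3)\<leftarrow>Delta_in A a'.
      \<Sum>(y1,y')\<leftarrow>Delta_in X w. \<Sum>(y2,y3)\<leftarrow>Delta_in X y'.
      \<sigma> a3 (S y1) * \<sigma> a1 y3 * cv (l (mult y2 x)) (r a2) h)"
    by (simp only: r_l_commute_in[OF a w] cv_sum_right cv_scale_right l_mult
        cv_assoc[OF lin_l lin_l lin_r])
  finally show ?thesis
    using x a w
    by (simp only:) (intro U_sum_pairs U_scale U_lr; meson Delta_in_mem[OF A] Delta_in_mem[OF X] sub_hopf_mult[OF X])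
qed

lemma U_cv_l: assumes f: "f \<in> U" and w: "w \<in> X" shows "cv f (l w) \<in> U"
proof -
  obtain L where L: "\<forall>(c,x,a)\<in>set L. x \<in> X \<and> a \<in> A" "f = (\<lambda>h. \<Sum>(c,x,a)\<leftarrow>L. c * cv (l x) (r a) h)"
    using f U_iff by blast
  have "cv f (l w) = (\<lambda>h. \<Sum>(c,x,a)\<leftarrow>L. c * cv (cv (l x) (r a)) (l w) h)"
    unfolding L(2) by (rule ext, induction L)
      (auto simp: cv_apply sum_pairs_addf distrib_right sum_pairs_const_mult sum_pairs_mult_const mult.assoc)
  also have "\<dots> \<in> U"
    using U_sum[of L "\<lambda>(c,x,a) h. c * cv (cv (l x) (r a)) (l w) h"] L(1)
    by (auto simp: case_prod_beta' intro!: U_scale U_lr_l w)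
  finally show ?thesis .
qed

lemma cv_l_r_mult:
  "cv (l x) (r a) (mult u v)
     = (\<Sum>(x1,x2)\<leftarrow>Delta x. \<Sum>(a1,a2)\<leftarrow>Delta a. cv (l x1) (r a2) u * cv (l x2) (r a1) v)"
proof -
  have "cv (l x) (r a) (mult u v)
      = (\<Sum>(u1,u2)\<leftarrow>Delta u. \<Sum>(v1,v2)\<leftarrow>Delta v. \<sigma> (mult u1 v1) x * \<sigma> a (mult u2 v2))"
    unfolding cv_apply l_apply r_apply by (rule Delta_mult_sum) (intro lin_intros)+
  also have "\<dots> = (\<Sum>(u1,u2)\<leftarrow>Delta u. \<Sum>(v1,v2)\<leftarrow>Delta v. \<Sum>(x1,x2)\<leftarrow>Delta x. \<Sum>(a1,a2)\<leftarrow>Delta a.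
       \<sigma> u1 x1 * \<sigma> v1 x2 * (\<sigma> a2 u2 * \<sigma> a1 v2))"
    by (simp only: sigma_mult_left sigma_mult_right sum_pairs_mult_const sum_pairs_const_mult,
        intro sum_pairs_cong, rule sum_pairs_swap)
  also have "\<dots> = (\<Sum>(x1,x2)\<leftarrow>Delta x. \<Sum>(a1,a2)\<leftarrow>Delta a. \<Sum>(u1,u2)\<leftarrow>Delta u. \<Sum>(v1,v2)\<leftarrow>Delta v.
       \<sigma> u1 x1 * \<sigma> v1 x2 * (\<sigma> a2 u2 * \<sigma> a1 v2))"
    by (simp only: sum_pairs_pull2[where W="Delta u"] sum_pairs_pull2[where W="Delta v"])
  also have "\<dots> = (\<Sum>(x1,x2)\<leftarrow>Delta x. \<Sum>(a1,a2)\<leftarrow>Delta a. cv (l x1) (r a2) u * cv (l x2) (r a1) v)"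
    by (simp only: cv_apply l_apply r_apply sum_pairs_mult_const sum_pairs_const_mult,
        intro sum_pairs_cong, rule trans[OF sum_pairs_swap], intro sum_pairs_cong, simp only: mult_ac)
  finally show ?thesis .
qed

lemma U_coproduct_exists:
  assumes f: "f \<in> U"
  shows "\<exists>M. set M \<subseteq> U \<times> U \<and> (\<forall>u v. (\<Sum>(g,g')\<leftarrow>M. g u * g' v) = f (mult u v))"
proof -
  obtain L where L: "\<forall>(c,x,a)\<in>set L. x \<in> X \<and> a \<in> A" "f = (\<lambda>h. \<Sum>(c,x,a)\<leftarrow>L. c * cv (l x) (r a) h)"
    using f U_iff by blast
  define M where "M = concat (map (\<lambda>(c,x,a). concat (map (\<lambda>(x1,x2). map (\<lambda>(a1,a2).
     ((\<lambda>h. c * cv (l x1) (r a2) h), cv (l x2) (r a1))) (Delta_in A a)) (Delta_in X x))) L)"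
  have "set M \<subseteq> U \<times> U"
    unfolding M_def using L(1)
    by (auto simp del: l_apply r_apply intro!: U_scale U_lr dest: Delta_in_mem[OF X] Delta_in_mem[OF A])
  moreover have "(\<Sum>(g,g')\<leftarrow>M. g u * g' v) = f (mult u v)" for u v
  proof -
    have summand: "(\<Sum>(x1,x2)\<leftarrow>Delta_in X x. \<Sum>(a1,a2)\<leftarrow>Delta_in A a. c * cv (l x1) (r a2) u * cv (l x2) (r a1) v)
        = c * cv (l x) (r a) (mult u v)" if "x \<in> X" "a \<in> A" for c x a
      using that
      by (simp only: cv_l_r_mult sum_pairs_const_mult mult.assoc,
          intro sum_Delta_in[OF X] sum_Delta_in[OF A] refl; (intro lin_intros; (intro lin_intros)?)?)
    have "(\<Sum>(g,g')\<leftarrow>M. g u * g' v) = (\<Sum>(c,x,a)\<leftarrow>L. \<Sum>(x1,x2)\<leftarrow>Delta_in X x. \<Sum>(a1,a2)\<leftarrow>Delta_in A a.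
        c * cv (l x1) (r a2) u * cv (l x2) (r a1) v)"
      unfolding M_def by (induction L) auto
    also have "\<dots> = f (mult u v)"
      unfolding L(2) using L(1) summand by (induction L) auto
    finally show ?thesis .
  qed
  ultimately show ?thesis by blast
qed

lemma DeltaU:
  assumes "f \<in> U"
  shows "set (DeltaU mult U f) \<subseteq> U \<times> U"
    and "(\<Sum>(g,g')\<leftarrow>DeltaU mult U f. g u * g' v) = f (mult u v)"
  using someI_ex[OF U_coproduct_exists[OF assms]] unfolding DeltaU_def by auto

abbreviation DU where "DU f \<equiv> DeltaU mult U f"

lemma DeltaU_DeltaU:
  assumes n: "n \<in> U"
  shows "(\<Sum>(p,n3)\<leftarrow>DU n. \<Sum>(n1,n2)\<leftarrow>DU p. n3 c * n1 a * n2 b) = n (mult (mult a b) c)"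
proof -
  have "(\<Sum>(p,n3)\<leftarrow>DU n. \<Sum>(n1,n2)\<leftarrow>DU p. n3 c * n1 a * n2 b) = (\<Sum>(p,n3)\<leftarrow>DU n. p (mult a b) * n3 c)"
  proof (rule sum_pairs_cong)
    fix p n3 assume "(p,n3) \<in> set (DU n)"
    then have "p \<in> U" using DeltaU(1)[OF n] by auto
    have "(\<Sum>(n1,n2)\<leftarrow>DU p. n3 c * n1 a * n2 b) = n3 c * (\<Sum>(n1,n2)\<leftarrow>DU p. n1 a * n2 b)"
      by (simp only: sum_pairs_const_mult mult.assoc)
    then show "(\<Sum>(n1,n2)\<leftarrow>DU p. n3 c * n1 a * n2 b) = p (mult a b) * n3 c"
      using DeltaU(2)[OF \<open>p \<in> U\<close>, of a b] by (simp add: mult.commute)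
  qed
  also have "\<dots> = n (mult (mult a b) c)"
    by (rule DeltaU(2)[OF n])
  finally show ?thesis .
qed

lemma l_T_exchange_U:
  assumes n: "n \<in> U"
  shows "cv (l (T x)) n = (\<lambda>h. \<Sum>(p,n3)\<leftarrow>DU n. \<Sum>(n1,n2)\<leftarrow>DU p. \<Sum>(x1,q)\<leftarrow>Delta x. \<Sum>(x2,x3)\<leftarrow>Delta q.
      n3 x1 * n1 (T x3) * cv n2 (l (T x2)) h)"
proof
  fix h
  have "(\<Sum>(p,n3)\<leftarrow>DU n. \<Sum>(n1,n2)\<leftarrow>DU p. \<Sum>(x1,q)\<leftarrow>Delta x. \<Sum>(x2,x3)\<leftarrow>Delta q.
      n3 x1 * n1 (T x3) * cv n2 (l (T x2)) h)
    = (\<Sum>(x1,q)\<leftarrow>Delta x. \<Sum>(x2,x3)\<leftarrow>Delta q. \<Sum>(b,c)\<leftarrow>Delta h. \<Sum>(p,n3)\<leftarrow>DU n. \<Sum>(n1,n2)\<leftarrow>DU p.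
      n3 x1 * n1 (T x3) * (n2 b * \<sigma> c (T x2)))"
    by (simp only: cv_apply l_apply sum_pairs_const_mult sum_pairs_pull2[where W="Delta _"])
  also have "\<dots> = (\<Sum>(x1,q)\<leftarrow>Delta x. \<Sum>(x2,x3)\<leftarrow>Delta q. \<Sum>(b,c)\<leftarrow>Delta h.
      n (mult (mult (T x3) b) x1) * \<sigma> c (T x2))"
    by (simp only: mult.assoc[symmetric] sum_pairs_mult_const[symmetric] DeltaU_DeltaU[OF n])
  also have "\<dots> = cv (l (T x)) n h"
    by (simp only: sum_pairs_pull2[where W="Delta h"] l_T_exchange[OF U_lin[OF n]])
  finally show "cv (l (T x)) n h = (\<Sum>(p,n3)\<leftarrow>DU n. \<Sum>(n1,n2)\<leftarrow>DU p. \<Sum>(x1,q)\<leftarrow>Delta x.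
      \<Sum>(x2,x3)\<leftarrow>Delta q. n3 x1 * n1 (T x3) * cv n2 (l (T x2)) h)" ..
qed

lemma cv_l_T_pair:
  assumes m: "m \<in> U" and n: "n \<in> U"
  shows "cv (cv m (l (T x))) (cv n (l (T y)))
       = (\<lambda>h. \<Sum>(p,n3)\<leftarrow>DU n. \<Sum>(n1,n2)\<leftarrow>DU p. \<Sum>(x1,q)\<leftarrow>Delta x. \<Sum>(x2,x3)\<leftarrow>Delta q.
            cv (\<lambda>h. n3 x1 * n1 (T x3) * cv m n2 h) (l (T (mult x2 y))) h)"
proof -
  note lins = U_lin[OF m] U_lin[OF n] lin_l lin_cv
  have regroup: "cv (cv m n2) (l (T (mult x2 y))) = cv m (cv (cv n2 (l (T x2))) (l (T y)))"
    if "n2 \<in> U" for n2 x2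
    using U_lin[OF that] by (simp add: T_mult l_mult cv_assoc lins)
  have n2_in_U: "n2 \<in> U" if "(p,n3) \<in> set (DU n)" "(n1,n2) \<in> set (DU p)" for p n3 n1 n2
    using that DeltaU(1)[OF n] DeltaU(1) by blast
  have "cv (cv m (l (T x))) (cv n (l (T y))) = cv m (cv (cv (l (T x)) n) (l (T y)))"
    by (simp add: cv_assoc lins)
  also have "\<dots> = (\<lambda>h. \<Sum>(p,n3)\<leftarrow>DU n. \<Sum>(n1,n2)\<leftarrow>DU p. \<Sum>(x1,q)\<leftarrow>Delta x. \<Sum>(x2,x3)\<leftarrow>Delta q.
      n3 x1 * n1 (T x3) * cv m (cv (cv n2 (l (T x2))) (l (T y))) h)"
    by (simp only: l_T_exchange_U[OF n] cv_sum_left cv_scale_left cv_sum_right cv_scale_right)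
  also have "\<dots> = (\<lambda>h. \<Sum>(p,n3)\<leftarrow>DU n. \<Sum>(n1,n2)\<leftarrow>DU p. \<Sum>(x1,q)\<leftarrow>Delta x. \<Sum>(x2,x3)\<leftarrow>Delta q.
      cv (\<lambda>h. n3 x1 * n1 (T x3) * cv m n2 h) (l (T (mult x2 y))) h)"
    by (intro ext sum_pairs_cong) (simp add: cv_scale_left regroup n2_in_U)
  finally show ?thesis .
qed

lemma cv_l_T_mult:
  assumes m: "m \<in> U"
  shows "(\<Sum>(m1,m2)\<leftarrow>DU m. \<Sum>(x1,x2)\<leftarrow>Delta x. cv m2 (l (T x1)) a * cv m1 (l (T x2)) b)
       = cv m (l (T x)) (mult b a)"
proof -
  note L = lin_comp_linH[OF U_lin[OF m]]
  have "(\<Sum>(m1,m2)\<leftarrow>DU m. \<Sum>(x1,x2)\<leftarrow>Delta x. cv m2 (l (T x1)) a * cv m1 (l (T x2)) b)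
     = (\<Sum>(m1,m2)\<leftarrow>DU m. \<Sum>(x1,x2)\<leftarrow>Delta x. \<Sum>(a1,a2)\<leftarrow>Delta a. \<Sum>(b1,b2)\<leftarrow>Delta b.
          m2 a1 * \<sigma> a2 (T x1) * (m1 b1 * \<sigma> b2 (T x2)))"
    by (simp only: cv_apply l_apply sum_pairs_mult_const sum_pairs_const_mult,
        intro sum_pairs_cong, rule sum_pairs_swap)
  also have "\<dots> = (\<Sum>(x1,x2)\<leftarrow>Delta x. \<Sum>(a1,a2)\<leftarrow>Delta a. \<Sum>(b1,b2)\<leftarrow>Delta b. \<Sum>(m1,m2)\<leftarrow>DU m.
          m2 a1 * \<sigma> a2 (T x1) * (m1 b1 * \<sigma> b2 (T x2)))"
    by (rule sum_pairs_pull3[symmetric])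
  also have "\<dots> = (\<Sum>(x1,x2)\<leftarrow>Delta x. \<Sum>(a1,a2)\<leftarrow>Delta a. \<Sum>(b1,b2)\<leftarrow>Delta b.
          m (mult b1 a1) * (\<sigma> b2 (T x2) * \<sigma> a2 (T x1)))"
  proof (intro sum_pairs_cong)
    fix x1 x2 a1 a2 b1 b2
    have "(\<Sum>(m1,m2)\<leftarrow>DU m. m2 a1 * \<sigma> a2 (T x1) * (m1 b1 * \<sigma> b2 (T x2)))
        = (\<sigma> b2 (T x2) * \<sigma> a2 (T x1)) * (\<Sum>(m1,m2)\<leftarrow>DU m. m1 b1 * m2 a1)"
      by (simp only: sum_pairs_const_mult, intro sum_pairs_cong, simp only: mult_ac)
    then show "(\<Sum>(m1,m2)\<leftarrow>DU m. m2 a1 * \<sigma> a2 (T x1) * (m1 b1 * \<sigma> b2 (T x2)))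
        = m (mult b1 a1) * (\<sigma> b2 (T x2) * \<sigma> a2 (T x1))"
      using DeltaU(2)[OF m] by (simp only: mult_ac)
  qed
  also have "\<dots> = (\<Sum>(g1,g2)\<leftarrow>Delta (T x). \<Sum>(b1,b2)\<leftarrow>Delta b. \<Sum>(a1,a2)\<leftarrow>Delta a.
          m (mult b1 a1) * (\<sigma> b2 g1 * \<sigma> a2 g2))"
    by (subst Delta_T, (intro lin_intros L; (intro lin_intros L)?)+, intro sum_pairs_cong sum_pairs_swap)
  also have "\<dots> = (\<Sum>(b1,b2)\<leftarrow>Delta b. \<Sum>(a1,a2)\<leftarrow>Delta a. m (mult b1 a1) * \<sigma> (mult b2 a2) (T x))"
    by (simp only: sum_pairs_pull2[where W="Delta (T x)"] sigma_mult_left sum_pairs_const_mult)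
  also have "\<dots> = cv m (l (T x)) (mult b a)"
    unfolding cv_apply l_apply by (rule Delta_mult_sum[symmetric]) (intro lin_intros L)+
  finally show ?thesis .
qed

end

section \<open>The projection \<open>\<pi>\<close>\<close>

context cqt_HXA
begin

abbreviation \<pi> where "\<pi> \<equiv> piD Delta S \<sigma>"

lemma piD_eq: "\<pi> d = (\<lambda>h. \<Sum>(m,y)\<leftarrow>d. cv m (l (T y)) h)"
  by (simp add: piD_def T_def)

lemma piD_in_U: "set d \<subseteq> U \<times> X \<Longrightarrow> \<pi> d \<in> U"
  unfolding piD_eq by (intro U_sum_pairs U_cv_l sub_hopf_T[OF X]) auto

lemma piD_append: "\<pi> (d @ d') h = \<pi> d h + \<pi> d' h"
  by (simp add: piD_def)

lemma piD_scale: "\<pi> (map (\<lambda>(m,x). ((\<lambda>t. c * m t), x)) d) h = c * \<pi> d h"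
  by (simp add: piD_eq cv_scale_left sum_pairs_const_mult)

lemma piD_multD:
  assumes "set d \<subseteq> U \<times> X" "set d' \<subseteq> U \<times> X"
  shows "\<pi> (multD mult Delta S U d d') = cv (\<pi> d) (\<pi> d')"
proof
  fix h
  have "\<pi> (multD mult Delta S U d d') h
      = (\<Sum>(m,x)\<leftarrow>d. \<Sum>(n,y)\<leftarrow>d'. \<Sum>(p,n3)\<leftarrow>DU n. \<Sum>(n1,n2)\<leftarrow>DU p. \<Sum>(x1,q)\<leftarrow>Delta x.
          \<Sum>(x2,x3)\<leftarrow>Delta q. cv (\<lambda>h. n3 x1 * n1 (T x3) * cv m n2 h) (l (T (mult x2 y))) h)"
    by (simp add: piD_def multD_def T_def sum_pairs_concat)
  also have "\<dots> = (\<Sum>(m,x)\<leftarrow>d. \<Sum>(n,y)\<leftarrow>d'. cv (cv m (l (T x))) (cv n (l (T y))) h)"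
  proof (intro sum_pairs_cong)
    fix m x n y assume "(m,x) \<in> set d" "(n,y) \<in> set d'"
    then have "m \<in> U" "n \<in> U" using assms by auto
    then show "(\<Sum>(p,n3)\<leftarrow>DU n. \<Sum>(n1,n2)\<leftarrow>DU p. \<Sum>(x1,q)\<leftarrow>Delta x. \<Sum>(x2,x3)\<leftarrow>Delta q.
        cv (\<lambda>h. n3 x1 * n1 (T x3) * cv m n2 h) (l (T (mult x2 y))) h)
      = cv (cv m (l (T x))) (cv n (l (T y))) h"
      by (simp add: cv_l_T_pair)
  qed
  also have "\<dots> = cv (\<pi> d) (\<pi> d') h"
    by (simp only: piD_eq cv_sum_left cv_sum_right)
  finally show "\<pi> (multD mult Delta S U d d') h = cv (\<pi> d) (\<pi> d') h" .
qed

lemma piD_unit: "\<pi> [(eps, one)] = eps"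
  by (simp add: piD_eq l_one cv_eps_left lin_eps)

lemma piD_comultD:
  assumes d: "set d \<subseteq> U \<times> X"
  shows "evq [(\<pi> [u], \<pi> [v]). (u,v) \<leftarrow> comultD mult Delta U d] (map (\<lambda>(g,g'). (g',g)) (DU (\<pi> d)))"
  unfolding evq_def
proof (intro allI)
  fix a b
  have "(\<Sum>(g,g')\<leftarrow>[(\<pi> [u], \<pi> [v]). (u,v) \<leftarrow> comultD mult Delta U d]. g a * g' b)
      = (\<Sum>(m,x)\<leftarrow>d. \<Sum>(m1,m2)\<leftarrow>DU m. \<Sum>(x1,x2)\<leftarrow>Delta x. cv m2 (l (T x1)) a * cv m1 (l (T x2)) b)"
    by (simp add: piD_def comultD_def T_def sum_pairs_concat)
  also have "\<dots> = \<pi> d (mult b a)"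
    using d by (simp add: piD_eq cv_l_T_mult subset_iff cong: sum_pairs_cong)
  also have "\<dots> = (\<Sum>(g,g')\<leftarrow>map (\<lambda>(g,g'). (g',g)) (DU (\<pi> d)). g a * g' b)"
    using DeltaU(2)[OF piD_in_U[OF d]] by (simp add: mult.commute)
  finally show "(\<Sum>(g,g')\<leftarrow>[(\<pi> [u], \<pi> [v]). (u,v) \<leftarrow> comultD mult Delta U d]. g a * g' b)
      = (\<Sum>(g,g')\<leftarrow>map (\<lambda>(g,g'). (g',g)) (DU (\<pi> d)). g a * g' b)" .
qed

lemma piD_counit:
  assumes "set d \<subseteq> U \<times> X"
  shows "\<pi> d one = counitD one eps d"
proof -
  have "cv m (l (T y)) one = m one * eps y" if "m \<in> U" for m y
  proof -
    have "cv m (l (T y)) one = m one * \<sigma> one (T y)"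
      unfolding cv_apply l_apply by (rule Delta_one_sum) (intro lin_intros lin_comp_linH[OF U_lin[OF that]])+
    then show ?thesis by (simp add: eps_T)
  qed
  then show ?thesis
    using assms by (auto simp: piD_eq counitD_def subset_iff cong: sum_pairs_cong)
qed

lemma piD_section: "\<phi> \<in> U \<Longrightarrow> \<pi> [(\<phi>, one)] = \<phi>"
  by (simp add: piD_eq l_one cv_eps_right U_lin)

end

theorem proposition1p5:
  fixes sc :: "'k::field \<Rightarrow> 'h::ab_group_add \<Rightarrow> 'h"
    and mult :: "'h \<Rightarrow> 'h \<Rightarrow> 'h" and one :: 'h
    and Delta :: "'h \<Rightarrow> ('h \<times> 'h) list" and eps :: "'h \<Rightarrow> 'k" and S :: "'h \<Rightarrow> 'h"
    and \<sigma> :: "'h \<Rightarrow> 'h \<Rightarrow> 'k" and X A :: "'h set"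
  assumes H: "hopf_algebra sc mult one Delta eps S"
    and sig: "cqt sc mult one Delta eps \<sigma>"
    and X: "sub_hopf sc mult one Delta S X"
    and A: "sub_hopf sc mult one Delta S A"
  defines "U \<equiv> HXA Delta \<sigma> X A"
  defines "Dreps \<equiv> {d. set d \<subseteq> U \<times> X}"
  shows
    \<comment> \<open>pi maps D(U^cop,X) into U\<close>
    "(\<forall>d\<in>Dreps. piD Delta S \<sigma> d \<in> U)
     \<comment> \<open>linearity\<close>
     \<and> (\<forall>d\<in>Dreps. \<forall>d'\<in>Dreps. \<forall>h. piD Delta S \<sigma> (d @ d') h = piD Delta S \<sigma> d h + piD Delta S \<sigma> d' h)
     \<and> (\<forall>d\<in>Dreps. \<forall>c h. piD Delta S \<sigma> (map (\<lambda>(m,x). ((\<lambda>t. c * m t), x)) d) h = c * piD Delta S \<sigma> d h)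
     \<comment> \<open>multiplicative and unital\<close>
     \<and> (\<forall>d\<in>Dreps. \<forall>d'\<in>Dreps.
          piD Delta S \<sigma> (multD mult Delta S U d d') = conv Delta (piD Delta S \<sigma> d) (piD Delta S \<sigma> d'))
     \<and> piD Delta S \<sigma> [(eps, one)] = eps
     \<comment> \<open>comultiplicative into U^cop: (pi (x) pi) Delta_D = Delta_{U^cop} pi\<close>
     \<and> (\<forall>d\<in>Dreps. evq [(piD Delta S \<sigma> [u], piD Delta S \<sigma> [v]). (u,v) \<leftarrow> comultD mult Delta U d]
                     (map (\<lambda>(g,g'). (g',g)) (DeltaU mult U (piD Delta S \<sigma> d))))
     \<comment> \<open>counital\<close>
     \<and> (\<forall>d\<in>Dreps. piD Delta S \<sigma> d one = counitD one eps d)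
     \<comment> \<open>pi o i = Id\<close>
     \<and> (\<forall>\<phi>\<in>U. piD Delta S \<sigma> [(\<phi>, one)] = \<phi>)"
proof -
  interpret cqt_HXA sc mult one Delta eps S \<sigma> X A
    using H sig X A by (simp add: cqt_HXA_def cqt_hopf_def hopf_def cqt_HXA_axioms_def cqt_hopf_axioms_def)
  show ?thesis
    unfolding U_def Dreps_def
    using piD_in_U piD_append piD_scale piD_multD piD_unit piD_comultD piD_counit piD_section
    by simp
qed

end
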